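(* If $a(\check z),b(\check z)\in\mathrm{End}(V)\{\check z\}$ are mutually local, then for every $\check n\in\check{\mathbb K}$ $\zeta^{\tilde a\tilde b}\,b(\check z)_{(\check n)}a(\check z)=\sum_{\check i\in\mathbb N^2}(-1)^{n-\bar n+i+\bar i}\,\partial_{\check z}^{(\check i)}\big(a(\check z)_{(\check n+\check i)}b(\check z)\big)$, the sum on the right being finite.
   Context: $\mathbb K$ of characteristic $0$; super vector spaces, parity $\tilde a$, $\zeta=-1$. $\check z=(z,\bar z)$, $\check z^{\check n}=z^n\bar z^{\bar n}$, $1=(1,1)$; $\partial^{(n)}=\partial^n/n!$ for $n\in\mathbb N$, $0$ otherwise, $\partial_{\check z}^{(\check n)}=\partial_z^{(n)}\partial_{\bar z}^{(\bar n)}$. A field is an $\mathrm{End}(V)$-valued formal distribution (exponents in $\mathbb K$) giving a vertex series on each vector. $(\check z-\check w)^{\check h}=\sum_{\check i\in\mathbb N^2}(-1)^{i+\bar i}\binom hi\binom{\bar h}{\bar i}\check z^{\check h-\check i}\check w^{\check i}$; $\check{\mathbb K}=\{\check h:h-\bar h\in\mathbb Z\}$; $(\check z-\check w)^{\check h}_{w>z}=(-1)^{h-\bar h}(\check w-\check z)^{\check h}$. $a,b$ mutually local: there are fields $c^i(\check z,\check w)$ and $\check h_i\in\check{\mathbb K}$ with $a(\check z)b(\check w)=\sum_i(\check z-\check w)^{-\check h_i}c^i$ and $\zeta^{\tilde a\tilde b}b(\check w)a(\check z)=\sum_i(\check z-\check w)^{-\check h_i}_{w>z}c^i$. Products: if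 $a(\check z)b(\check w)=\sum_i(\check z-\check w)^{-\check h_i}c^i$ is an OPE (fields $c^i$, $\check h_i\in\mathbb K^2$), $a(\check w)_{(\check n)}b(\check w):=\sum_i\partial_{\check z}^{(\check h_i-1-\check n)}c^i(\check z,\check w)|_{\check z=\check w}$; this is independent of the OPE. *)

theory Defs
  imports Complex_Main "HOL-Library.Groups_Big_Fun"
begin

text \<open>
  Parities are booleans (False = even, True = odd).
  A pair z-check = (z, zbar) of exponents is an element of 'k * 'k.

  An End(V)-valued formal distribution in one variable z-check is represented by its
  coefficient function  a :: 'k*'k => 'v => 'v,  a p = coefficient of z^p zbar^pbar.
  In two variables (z-check, w-check): c p q = coefficient of z-check^p w-check^q.
\<close>

type_synonym ('k, 'v) fdist1 = "'k \<times> 'k \<Rightarrow> 'v \<Rightarrow> 'v"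
type_synonym ('k, 'v) fdist2 = "'k \<times> 'k \<Rightarrow> 'k \<times> 'k \<Rightarrow> 'v \<Rightarrow> 'v"

definition super_vs :: "('k::field \<Rightarrow> 'v::ab_group_add \<Rightarrow> 'v) \<Rightarrow> 'v set \<Rightarrow> 'v set \<Rightarrow> bool" where
  "super_vs sc V0 V1 \<longleftrightarrow> vector_space sc \<and> module.subspace sc V0 \<and> module.subspace sc V1
     \<and> (\<forall>v. \<exists>!xy. fst xy \<in> V0 \<and> snd xy \<in> V1 \<and> v = fst xy + snd xy)"

definition par_space :: "'v set \<Rightarrow> 'v set \<Rightarrow> bool \<Rightarrow> 'v set" where
  "par_space V0 V1 p = (if p then V1 else V0)"

definition zeta_pow :: "bool \<Rightarrow> bool \<Rightarrow> 'k::comm_ring_1" where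
  "zeta_pow pa pb = (-1) ^ (if pa \<and> pb then 1 else 0)"

definition padd :: "'k::ring_1 \<times> 'k \<Rightarrow> 'k \<times> 'k \<Rightarrow> 'k \<times> 'k" where
  "padd x y = (fst x + fst y, snd x + snd y)"
definition psub :: "'k::ring_1 \<times> 'k \<Rightarrow> 'k \<times> 'k \<Rightarrow> 'k \<times> 'k" where
  "psub x y = (fst x - fst y, snd x - snd y)"
definition pneg :: "'k::ring_1 \<times> 'k \<Rightarrow> 'k \<times> 'k" where
  "pneg x = (- fst x, - snd x)"
definition pnat :: "nat \<times> nat \<Rightarrow> 'k::ring_1 \<times> 'k" where
  "pnat i = (of_nat (fst i), of_nat (snd i))"

definition Kcheck :: "('k::ring_1 \<times> 'k) set" where
  "Kcheck = {h. fst h - snd h \<in> \<int>}"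

text \<open>The integer m with of_int m = x (unique in characteristic 0), and (-1)^x for x in Z.\<close>
definition int_part :: "'k::ring_char_0 \<Rightarrow> int" where
  "int_part x = (THE m. of_int m = x)"
definition neg1_pow :: "'k::{field_char_0} \<Rightarrow> 'k" where
  "neg1_pow x = (-1) powi (int_part x)"

definition nat_part :: "'k::semiring_char_0 \<Rightarrow> nat" where
  "nat_part x = (THE m. of_nat m = x)"

definition vertex_series1 :: "('k::ring_1 \<times> 'k \<Rightarrow> 'v::zero) \<Rightarrow> bool" where
  "vertex_series1 f \<longleftrightarrow> (\<exists>S. finite S \<and>
     (\<forall>p. f p \<noteq> 0 \<longrightarrow> (\<exists>s\<in>S. \<exists>i::nat\<times>nat. p = padd s (pnat i))))"

definition vertex_series2 :: "('k::ring_1 \<times> 'k \<Rightarrow> 'k \<times> 'k \<Rightarrow> 'v::zero) \<Rightarrow> bool" where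
  "vertex_series2 f \<longleftrightarrow> (\<exists>S. finite S \<and>
     (\<forall>p q. f p q \<noteq> 0 \<longrightarrow> (\<exists>s\<in>S. \<exists>i j::nat\<times>nat. p = padd (fst s) (pnat i) \<and> q = padd (snd s) (pnat j))))"

definition field1 :: "('k::field \<Rightarrow> 'v::ab_group_add \<Rightarrow> 'v) \<Rightarrow> ('k, 'v) fdist1 \<Rightarrow> bool" where
  "field1 sc a \<longleftrightarrow> (\<forall>p. Vector_Spaces.linear sc sc (a p)) \<and> (\<forall>v. vertex_series1 (\<lambda>p. a p v))"

definition field2 :: "('k::field \<Rightarrow> 'v::ab_group_add \<Rightarrow> 'v) \<Rightarrow> ('k, 'v) fdist2 \<Rightarrow> bool" where
  "field2 sc c \<longleftrightarrow> (\<forall>p q. Vector_Spaces.linear sc sc (c p q)) \<and> (\<forall>v. vertex_series2 (\<lambda>p q. c p q v))"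

definition homogeneous :: "'v set \<Rightarrow> 'v set \<Rightarrow> bool \<Rightarrow> ('k, 'v) fdist1 \<Rightarrow> bool" where
  "homogeneous V0 V1 pa a \<longleftrightarrow>
     (\<forall>p v q. v \<in> par_space V0 V1 q \<longrightarrow> a p v \<in> par_space V0 V1 (q \<noteq> pa))"

text \<open>(z-check - w-check)^h-check * c(z-check, w-check), expanded in nonnegative powers of w:
  (z-w)^h = sum_{i in N^2} (-1)^(i+ibar) binom(h,i) binom(hbar,ibar) z^(h-i) w^i.\<close>
definition expand_zw :: "('k::field_char_0 \<Rightarrow> 'v::ab_group_add \<Rightarrow> 'v) \<Rightarrow> 'k \<times> 'k \<Rightarrow> ('k, 'v) fdist2 \<Rightarrow> ('k, 'v) fdist2" where
  "expand_zw sc h c = (\<lambda>p q v. Sum_any (\<lambda>i::nat\<times>nat.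
      sc ((-1) ^ (fst i + snd i) * (fst h gchoose fst i) * (snd h gchoose snd i))
         (c (padd (psub p h) (pnat i)) (psub q (pnat i)) v)))"

text \<open>(z-check - w-check)^h-check_(w>z) * c = (-1)^(h-hbar) (w-check - z-check)^h-check * c,
  expanded in nonnegative powers of z (for h-check in K-check).\<close>
definition expand_wz :: "('k::field_char_0 \<Rightarrow> 'v::ab_group_add \<Rightarrow> 'v) \<Rightarrow> 'k \<times> 'k \<Rightarrow> ('k, 'v) fdist2 \<Rightarrow> ('k, 'v) fdist2" where
  "expand_wz sc h c = (\<lambda>p q v. Sum_any (\<lambda>i::nat\<times>nat.
      sc (neg1_pow (fst h - snd h) * (-1) ^ (fst i + snd i) * (fst h gchoose fst i) * (snd h gchoose snd i))
         (c (psub p (pnat i)) (padd (psub q h) (pnat i)) v)))"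

definition mutually_local :: "('k::field_char_0 \<Rightarrow> 'v::ab_group_add \<Rightarrow> 'v) \<Rightarrow> bool \<Rightarrow> bool \<Rightarrow> ('k, 'v) fdist1 \<Rightarrow> ('k, 'v) fdist1 \<Rightarrow> bool" where
  "mutually_local sc pa pb a b \<longleftrightarrow> (\<exists>(I::nat set) h c. finite I \<and>
     (\<forall>i\<in>I. field2 sc (c i) \<and> h i \<in> Kcheck) \<and>
     (\<forall>p q v. a p (b q v) = (\<Sum>i\<in>I. expand_zw sc (pneg (h i)) (c i) p q v)) \<and>
     (\<forall>p q v. sc (zeta_pow pa pb) (b q (a p v)) = (\<Sum>i\<in>I. expand_wz sc (pneg (h i)) (c i) p q v)))"

definition is_OPE :: "('k::field_char_0 \<Rightarrow> 'v::ab_group_add \<Rightarrow> 'v) \<Rightarrow> ('k, 'v) fdist1 \<Rightarrow> ('k, 'v) fdist1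
    \<Rightarrow> nat set \<Rightarrow> (nat \<Rightarrow> 'k \<times> 'k) \<Rightarrow> (nat \<Rightarrow> ('k, 'v) fdist2) \<Rightarrow> bool" where
  "is_OPE sc a b I h c \<longleftrightarrow> finite I \<and> (\<forall>i\<in>I. field2 sc (c i)) \<and>
     (\<forall>p q v. a p (b q v) = (\<Sum>i\<in>I. expand_zw sc (pneg (h i)) (c i) p q v))"

text \<open>Divided derivatives: d^(k) = d^k/k! for k in N, and 0 otherwise;
  d_z^(k) z^p = binom(p,k) z^(p-k).\<close>
definition ddiv :: "'k::field_char_0 \<Rightarrow> 'k \<Rightarrow> 'k" where
  "ddiv k p = (if k \<in> \<nat> then (p + k) gchoose (nat_part k) else 0)"

definition deriv2 :: "('k::field_char_0 \<Rightarrow> 'v::ab_group_add \<Rightarrow> 'v) \<Rightarrow> 'k \<times> 'k \<Rightarrow> ('k, 'v) fdist2 \<Rightarrow> ('k, 'v) fdist2" where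
  "deriv2 sc k c = (\<lambda>p q v. sc (ddiv (fst k) (fst p) * ddiv (snd k) (snd p)) (c (padd p k) q v))"

definition deriv1 :: "('k::field_char_0 \<Rightarrow> 'v::ab_group_add \<Rightarrow> 'v) \<Rightarrow> 'k \<times> 'k \<Rightarrow> ('k, 'v) fdist1 \<Rightarrow> ('k, 'v) fdist1" where
  "deriv1 sc k a = (\<lambda>p v. sc (ddiv (fst k) (fst p) * ddiv (snd k) (snd p)) (a (padd p k) v))"

text \<open>Restriction z-check = w-check:  coefficient of w-check^q is sum_p c_(p, q-p).\<close>
definition diag :: "('k::ring_1, 'v::ab_group_add) fdist2 \<Rightarrow> ('k, 'v) fdist1" where
  "diag c = (\<lambda>q v. Sum_any (\<lambda>p. c p (psub q p) v))"

text \<open>The n-check-th product  a(w)_(n) b(w) := sum_i d_z^(h_i - 1 - n) c^i(z,w)|_(z=w) for any OPE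
  (independent of the chosen OPE).\<close>
definition nprod :: "('k::field_char_0 \<Rightarrow> 'v::ab_group_add \<Rightarrow> 'v) \<Rightarrow> ('k, 'v) fdist1 \<Rightarrow> 'k \<times> 'k
    \<Rightarrow> ('k, 'v) fdist1 \<Rightarrow> ('k, 'v) fdist1" where
  "nprod sc a n b = (SOME d. \<exists>I h c. is_OPE sc a b I h c \<and>
      d = (\<lambda>q v. \<Sum>i\<in>I. diag (deriv2 sc (psub (psub (h i) (1, 1)) n) (c i)) q v))"

end

theory Submission
  imports Defs "HOL-Library.Product_Plus" "HOL-Computational_Algebra.Formal_Power_Series"
begin

text \<open>
  The \<open>n\<close>-th product is read off an OPE \<open>a(z) b(w) = \<Sum>\<^sub>i (z - w)^(-h\<^sub>i) c\<^sub>i(z, w)\<close>, so one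
  first shows that it does not depend on the OPE. Comparing two OPEs gives a vanishing sum
  \<open>\<Sum>\<^sub>l (z - w)^(-h\<^sub>l) g\<^sub>l\<close>. Multiplying by powers \<open>(z - w)^k\<close> with \<open>k \<in> \<nat>\<^sup>2\<close> brings all exponents
  of one class modulo \<open>\<int>\<^sup>2\<close> to a common one without changing the quantities
  \<open>\<partial>\<^sub>z^(h\<^sub>l - 1 - n) g\<^sub>l |\<^sub>z\<^sub>=\<^sub>w\<close>. The classes are separated by Euler operators: a suitable
  product of them annihilates all classes but one, on which it is injective. Hence every class
  vanishes separately.

  Locality gives the OPE \<open>b(z) a(w) = \<Sum>\<^sub>i (z - w)^(-h\<^sub>i) \<zeta>^(a b) (-1)^(h\<^sub>i - hbar\<^sub>i) c\<^sub>i(w, z)\<close>,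
  and the formula follows by Taylor expanding \<open>c\<^sub>i(w, z)\<close> around \<open>z = w\<close>.
\<close>

lemma nat_part_of_nat [simp]: "nat_part (of_nat m :: 'k::semiring_char_0) = m"
  unfolding nat_part_def by (rule the_equality) auto

lemma of_nat_nat_part: "(x::'k::semiring_char_0) \<in> \<nat> \<Longrightarrow> of_nat (nat_part x) = x"
  by (auto elim!: Nats_cases)

lemma int_part_of_int [simp]: "int_part (of_int m :: 'k::ring_char_0) = m"
  unfolding int_part_def by (rule the_equality) auto

lemma of_int_int_part: "(x::'k::ring_char_0) \<in> \<int> \<Longrightarrow> of_int (int_part x) = x"
  by (auto elim!: Ints_cases)

lemma padd_eq: "padd x y = x + y" by (simp add: padd_def prod_eq_iff)
lemma psub_eq: "psub x y = x - y" by (simp add: psub_def prod_eq_iff)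
lemma pneg_eq: "pneg x = - x" by (simp add: pneg_def prod_eq_iff)
lemma fst_pnat [simp]: "fst (pnat i) = of_nat (fst i)" by (simp add: pnat_def)
lemma snd_pnat [simp]: "snd (pnat i) = of_nat (snd i)" by (simp add: pnat_def)

lemma Nats_diff_of_nat: "(of_nat N - of_nat i :: 'k::ring_char_0) \<in> \<nat> \<longleftrightarrow> i \<le> N"
proof
  assume "of_nat N - of_nat i \<in> (\<nat>::'k set)"
  then obtain m where "of_nat N - of_nat i = (of_nat m :: 'k)" by (auto elim!: Nats_cases)
  then have "(of_nat N :: 'k) = of_nat (m + i)" by (simp add: algebra_simps)
  then have "N = m + i" using of_nat_eq_iff by blast
  then show "i \<le> N" by simp
next
  assume "i \<le> N" then show "of_nat N - of_nat i \<in> (\<nat>::'k set)"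
    by (metis of_nat_in_Nats of_nat_diff)
qed

lemma diff_of_nat_notin_Nats: "(t::'k::ring_char_0) \<notin> \<nat> \<Longrightarrow> t - of_nat i \<notin> \<nat>"
  by (metis Nats_add of_nat_in_Nats diff_add_cancel)

lemma add_1_in_Nats_imp_eq_0: "(t::'k::ring_char_0) + 1 \<in> \<nat> \<Longrightarrow> t \<notin> \<nat> \<Longrightarrow> t + 1 = 0"
proof -
  assume "t + 1 \<in> \<nat>" "t \<notin> \<nat>"
  then obtain k where k: "t + 1 = of_nat k" by (auto elim!: Nats_cases)
  show ?thesis
  proof (cases k)
    case (Suc j)
    then have "t = of_nat j" using k by (simp add: algebra_simps)
    then show ?thesis using \<open>t \<notin> \<nat>\<close> by simp
  qed (use k in simp)
qed

lemma gbinomial_of_nat_eq_0: "k < i \<Longrightarrow> ((of_nat k :: 'k::field_char_0) gchoose i) = 0"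
  by (metis binomial_eq_0 binomial_gbinomial of_nat_0)

lemma Sum_any_reindex_finite:
  assumes "finite A" "inj_on \<phi> A" "\<And>y. F y \<noteq> 0 \<Longrightarrow> y \<in> \<phi> ` A"
  shows "Sum_any F = (\<Sum>i\<in>A. F (\<phi> i))"
proof -
  have "Sum_any F = sum F (\<phi> ` A)"
    using assms(1,3) by (intro Sum_any.expand_superset) auto
  also have "\<dots> = (\<Sum>i\<in>A. F (\<phi> i))" using assms(2) by (simp add: sum.reindex)
  finally show ?thesis .
qed

lemma Sum_any_reindex_inj:
  assumes "inj \<phi>" "{x. F x \<noteq> 0} \<subseteq> range \<phi>"
  shows "Sum_any F = Sum_any (\<lambda>i. F (\<phi> i))"
proof -
  have e: "{x. F x \<noteq> 0} = \<phi> ` {i. F (\<phi> i) \<noteq> 0}" using assms(2) by blast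
  have "Sum_any F = sum F (\<phi> ` {i. F (\<phi> i) \<noteq> 0})" by (simp only: Sum_any.expand_set e)
  also have "\<dots> = Sum_any (\<lambda>i. F (\<phi> i))"
    using assms(1) by (simp add: sum.reindex inj_on_def inj_def Sum_any.expand_set)
  finally show ?thesis .
qed

lemma Sum_any_uminus: "Sum_any (\<lambda>x. - f x) = - Sum_any (f :: 'a \<Rightarrow> 'b::ab_group_add)"
proof -
  have "{x. - f x \<noteq> 0} = {x. f x \<noteq> 0}" by auto
  then show ?thesis by (simp add: Sum_any.expand_set sum_negf)
qed

lemma Sum_any_sum_swap:
  assumes "finite I" "\<forall>i\<in>I. finite {j. f i j \<noteq> 0}"
  shows "Sum_any (\<lambda>j. \<Sum>i\<in>I. f i j) = (\<Sum>i\<in>I. Sum_any (f i :: 'a \<Rightarrow> 'b::comm_monoid_add))"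
  using assms
proof (induction I rule: finite_induct)
  case empty then show ?case by simp
next
  case (insert x F)
  have f1: "finite {j. f x j \<noteq> 0}" using insert.prems by simp
  have f2: "finite {j. (\<Sum>i\<in>F. f i j) \<noteq> 0}"
  proof (rule finite_subset[of _ "\<Union>i\<in>F. {j. f i j \<noteq> 0}"])
    show "{j. (\<Sum>i\<in>F. f i j) \<noteq> 0} \<subseteq> (\<Union>i\<in>F. {j. f i j \<noteq> 0})"
      by (auto elim: sum.not_neutral_contains_not_neutral)
    show "finite (\<Union>i\<in>F. {j. f i j \<noteq> 0})" using insert by simp
  qed
  have "Sum_any (\<lambda>j. \<Sum>i\<in>insert x F. f i j) = Sum_any (\<lambda>j. f x j + (\<Sum>i\<in>F. f i j))"
    using insert.hyps by simp
  also have "\<dots> = Sum_any (f x) + Sum_any (\<lambda>j. \<Sum>i\<in>F. f i j)"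
    using f1 f2 by (rule Sum_any.distrib)
  finally show ?case using insert by simp
qed

section \<open>Expansion coefficients\<close>

text \<open>Exponents live in the field itself: \<open>zw_coeff s t\<close> is the coefficient of \<open>z^(s - t) w^t\<close>
  in the expansion of \<open>(z - w)^s\<close>, and \<open>deriv_coeff x k\<close> the factor produced by the divided
  derivative, \<open>\<partial>^k z^x = deriv_coeff x k \<cdot> z^(x - k)\<close>.\<close>

definition zw_coeff :: "'k::field_char_0 \<Rightarrow> 'k \<Rightarrow> 'k" where
  "zw_coeff s t = (if t \<in> \<nat> then (-1) ^ nat_part t * (s gchoose nat_part t) else 0)"

definition deriv_coeff :: "'k::field_char_0 \<Rightarrow> 'k \<Rightarrow> 'k" where
  "deriv_coeff x k = (if k \<in> \<nat> then x gchoose nat_part k else 0)"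

lemma zw_coeff_of_nat [simp]: "zw_coeff s (of_nat j) = (-1) ^ j * (s gchoose j)"
  by (simp add: zw_coeff_def)

lemma zw_coeff_0 [simp]: "zw_coeff s 0 = 1"
  using zw_coeff_of_nat[of s 0] by simp

lemma zw_coeff_notin_Nats: "t \<notin> \<nat> \<Longrightarrow> zw_coeff s t = 0"
  by (simp add: zw_coeff_def)

lemma deriv_coeff_of_nat [simp]: "deriv_coeff x (of_nat j) = x gchoose j"
  by (simp add: deriv_coeff_def)

lemma deriv_coeff_notin_Nats: "t \<notin> \<nat> \<Longrightarrow> deriv_coeff x t = 0"
  by (simp add: deriv_coeff_def)

lemma zw_coeff_recurrence: "(t + 1) * zw_coeff s (t + 1) = (t - s) * zw_coeff s (t :: 'k::field_char_0)"
proof (cases "t \<in> \<nat>")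
  case True
  then obtain j where t: "t = of_nat j" by (auto elim!: Nats_cases)
  have "t + 1 = of_nat (Suc j)" using t by simp
  then have "(t + 1) * zw_coeff s (t + 1) = - ((-1) ^ j * (of_nat (Suc j) * (s gchoose Suc j)))"
    by (simp only: zw_coeff_of_nat) (simp add: algebra_simps)
  also have "of_nat (Suc j) * (s gchoose Suc j) = (s - of_nat j) * (s gchoose j)"
    by (metis gbinomial_absorption gbinomial_absorb_comp)
  finally show ?thesis using t by (simp add: algebra_simps)
next
  case False
  then show ?thesis
    using add_1_in_Nats_imp_eq_0[of t] by (cases "t + 1 \<in> \<nat>") (auto simp: zw_coeff_notin_Nats)
qed

lemma zw_coeff_Vandermonde:
  "(\<Sum>i\<le>k. zw_coeff (of_nat k) (of_nat i) * zw_coeff u (t - of_nat i)) = zw_coeff (of_nat k + u) (t::'k::field_char_0)"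
proof (cases "t \<in> \<nat>")
  case False
  then show ?thesis by (simp add: zw_coeff_notin_Nats diff_of_nat_notin_Nats)
next
  case True
  then obtain N where t: "t = of_nat N" by (auto elim!: Nats_cases)
  have "(\<Sum>i\<le>k. zw_coeff (of_nat k) (of_nat i) * zw_coeff u (t - of_nat i))
      = (\<Sum>i\<in>{0..N}. zw_coeff (of_nat k) (of_nat i) * zw_coeff u (t - of_nat i))"
  proof (rule sum.mono_neutral_cong)
    show "zw_coeff (of_nat k) (of_nat i) * zw_coeff u (t - of_nat i) = 0" if "i \<in> {..k} - {0..N}" for i
      using that t by (simp add: zw_coeff_notin_Nats Nats_diff_of_nat)
    show "zw_coeff (of_nat k) (of_nat i) * zw_coeff u (t - of_nat i) = 0" if "i \<in> {0..N} - {..k}" for i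
      using that by (simp add: gbinomial_of_nat_eq_0)
  qed auto
  also have "\<dots> = (\<Sum>i\<in>{0..N}. (-1)^N * ((of_nat k gchoose i) * (u gchoose (N - i))))"
  proof (rule sum.cong)
    fix i assume i: "i \<in> {0..N}"
    then have "t - of_nat i = of_nat (N - i)" using t by (simp add: of_nat_diff)
    moreover have "(-1::'k)^i * (-1)^(N-i) = (-1)^N" using i by (simp flip: power_add)
    ultimately show "zw_coeff (of_nat k) (of_nat i) * zw_coeff u (t - of_nat i)
        = (-1)^N * ((of_nat k gchoose i) * (u gchoose (N - i)))"
      by (simp only: zw_coeff_of_nat) (metis (no_types, lifting) mult.assoc mult.left_commute)
  qed simp
  also have "\<dots> = (-1)^N * (of_nat k + u gchoose N)"
    by (simp add: sum_distrib_left[symmetric] gbinomial_Vandermonde)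
  finally show ?thesis using t by simp
qed

lemma zw_coeff_Suc_Suc:
  "zw_coeff (of_nat (Suc k)) (of_nat (Suc i))
     = - zw_coeff (of_nat k) (of_nat i) + zw_coeff (of_nat k) (of_nat (Suc i) :: 'k::field_char_0)"
proof -
  have e: "(of_nat (Suc k) :: 'k) gchoose Suc i = (of_nat k gchoose i) + (of_nat k gchoose Suc i)"
    using gbinomial_Suc_Suc[of "of_nat k :: 'k" i] by (simp add: add.commute)
  show ?thesis unfolding zw_coeff_of_nat e by (simp add: algebra_simps)
qed

text \<open>\<open>\<Sum>\<^sub>i zw_coeff k i * f (x + k - i)\<close> is the \<open>k\<close>-th forward difference of \<open>f\<close> at \<open>x\<close>.\<close>

lemma forward_difference_Suc:
  fixes f :: "'k::field_char_0 \<Rightarrow> 'k"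
  shows "(\<Sum>i\<le>Suc k. zw_coeff (of_nat (Suc k)) (of_nat i) * f (x + of_nat (Suc k) - of_nat i))
    = (\<Sum>i\<le>k. zw_coeff (of_nat k) (of_nat i) * f ((x + 1) + of_nat k - of_nat i))
      - (\<Sum>i\<le>k. zw_coeff (of_nat k) (of_nat i) * f (x + of_nat k - of_nat i))"
proof -
  note zw_coeff_of_nat [simp del]
  let ?c = "\<lambda>a b. zw_coeff (of_nat a) (of_nat b) :: 'k"
  have "(\<Sum>i\<le>Suc k. ?c (Suc k) i * f (x + of_nat (Suc k) - of_nat i))
      = f (x + 1 + of_nat k) + (\<Sum>i\<le>k. ?c (Suc k) (Suc i) * f (x + of_nat (Suc k) - of_nat (Suc i)))"
    unfolding sum.atMost_Suc_shift by (simp add: algebra_simps)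
  also have "(\<Sum>i\<le>k. ?c (Suc k) (Suc i) * f (x + of_nat (Suc k) - of_nat (Suc i)))
      = (\<Sum>i\<le>k. ?c k (Suc i) * f ((x + 1) + of_nat k - of_nat (Suc i)))
        - (\<Sum>i\<le>k. ?c k i * f (x + of_nat k - of_nat i))"
    unfolding zw_coeff_Suc_Suc sum_subtractf[symmetric]
    by (rule sum.cong) (auto simp: algebra_simps)
  also have "f (x + 1 + of_nat k) + ((\<Sum>i\<le>k. ?c k (Suc i) * f ((x + 1) + of_nat k - of_nat (Suc i)))
        - (\<Sum>i\<le>k. ?c k i * f (x + of_nat k - of_nat i)))
      = (\<Sum>i\<le>Suc k. ?c k i * f ((x + 1) + of_nat k - of_nat i))
        - (\<Sum>i\<le>k. ?c k i * f (x + of_nat k - of_nat i))"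
    unfolding sum.atMost_Suc_shift by (simp add: algebra_simps)
  also have "(\<Sum>i\<le>Suc k. ?c k i * f ((x + 1) + of_nat k - of_nat i))
      = (\<Sum>i\<le>k. ?c k i * f ((x + 1) + of_nat k - of_nat i))"
    by (simp add: gbinomial_of_nat_eq_0 zw_coeff_of_nat)
  finally show ?thesis .
qed

lemma gbinomial_forward_difference:
  "(\<Sum>i\<le>k. zw_coeff (of_nat k) (of_nat i) * ((x + of_nat k - of_nat i) gchoose N))
     = (if k \<le> N then x gchoose (N - k) else (0::'k::field_char_0))"
proof (induction k arbitrary: x N)
  case 0 then show ?case by (simp del: zw_coeff_of_nat)
next
  case (Suc k)
  have eq: "(\<Sum>i\<le>Suc k. zw_coeff (of_nat (Suc k)) (of_nat i) * ((x + of_nat (Suc k) - of_nat i) gchoose N))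
     = (if k \<le> N then (x + 1) gchoose (N - k) else 0) - (if k \<le> N then x gchoose (N - k) else 0)"
    using forward_difference_Suc[of k "\<lambda>y. y gchoose N" x] Suc.IH[of "x + 1" N] Suc.IH[of x N]
    by (simp del: zw_coeff_of_nat)
  show ?case
  proof (cases "Suc k \<le> N")
    case True
    then have "N - k = Suc (N - Suc k)" by simp
    then show ?thesis using eq True gbinomial_Suc_Suc[of x "N - Suc k"] by simp
  next
    case False
    then show ?thesis using eq by (cases "k = N") auto
  qed
qed

lemma deriv_coeff_forward_difference:
  "(\<Sum>i\<le>k. zw_coeff (of_nat k) (of_nat i) * deriv_coeff (x + of_nat k - of_nat i) (w + of_nat k))
     = deriv_coeff x (w::'k::field_char_0)"
proof (cases "w + of_nat k \<in> \<nat>")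
  case False
  then have "w \<notin> \<nat>" by (metis Nats_add of_nat_in_Nats)
  then show ?thesis using False by (simp add: deriv_coeff_notin_Nats)
next
  case True
  then obtain N where N: "w + of_nat k = of_nat N" by (auto elim!: Nats_cases)
  then have w: "w = of_nat N - of_nat k" by (simp add: algebra_simps)
  have "(\<Sum>i\<le>k. zw_coeff (of_nat k) (of_nat i) * deriv_coeff (x + of_nat k - of_nat i) (w + of_nat k))
     = (if k \<le> N then x gchoose (N - k) else 0)"
    using gbinomial_forward_difference[of k x N] N by simp
  also have "\<dots> = deriv_coeff x w"
    using w by (auto simp: Nats_diff_of_nat deriv_coeff_notin_Nats of_nat_diff[symmetric] simp del: of_nat_diff)
  finally show ?thesis .
qed

lemma alternating_gbinomial_convolution:
  "(\<Sum>j\<le>k. (-1)^j * ((p + of_nat j) gchoose j) * (y gchoose (k - j)))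
     = (-1)^k * ((p + of_nat k - y) gchoose k :: 'k::field_char_0)"
proof -
  have neg: "(-p-1) gchoose j = (-1)^j * ((p + of_nat j) gchoose j)" for j
  proof -
    have "-p-1 = -(p+1)" "p + 1 + of_nat j - 1 = p + of_nat j" by simp_all
    then show ?thesis using gbinomial_minus[of "p + 1" j] by (simp only:)
  qed
  have "(\<Sum>j\<le>k. (-1)^j * ((p + of_nat j) gchoose j) * (y gchoose (k - j)))
      = (\<Sum>j\<le>k. ((-p-1) gchoose j) * (y gchoose (k - j)))"
    by (simp add: neg)
  also have "\<dots> = (-p-1 + y) gchoose k"
    using gbinomial_Vandermonde[of "-p-1" y k] by (simp add: atLeast0AtMost)
  also have "\<dots> = (-1)^k * ((of_nat k - (-p-1+y) - 1) gchoose k)" by (rule gbinomial_negated_upper)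
  finally show ?thesis by (simp add: algebra_simps)
qed

section \<open>Pairs of exponents\<close>

definition nat_pair :: "'k::semiring_1 \<times> 'k \<Rightarrow> bool" where
  "nat_pair t \<longleftrightarrow> fst t \<in> \<nat> \<and> snd t \<in> \<nat>"

definition int_pair :: "'k::ring_1 \<times> 'k \<Rightarrow> bool" where
  "int_pair t \<longleftrightarrow> fst t \<in> \<int> \<and> snd t \<in> \<int>"

definition zw_coeff2 :: "'k::field_char_0 \<times> 'k \<Rightarrow> 'k \<times> 'k \<Rightarrow> 'k" where
  "zw_coeff2 s t = zw_coeff (fst s) (fst t) * zw_coeff (snd s) (snd t)"

definition deriv_coeff2 :: "'k::field_char_0 \<times> 'k \<Rightarrow> 'k \<times> 'k \<Rightarrow> 'k" where
  "deriv_coeff2 x k = deriv_coeff (fst x) (fst k) * deriv_coeff (snd x) (snd k)"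

definition fin_supp :: "('a \<Rightarrow> 'b::zero) \<Rightarrow> bool" where
  "fin_supp g \<longleftrightarrow> finite {x. g x \<noteq> 0}"

lemma pnat_Pair [simp]: "pnat (a, b) = (of_nat a, of_nat b)"
  by (simp add: pnat_def)

lemma nat_pair_pnat [simp]: "nat_pair (pnat i)"
  by (simp add: nat_pair_def)

lemma pnat_eq_iff [simp]: "(pnat i = (pnat j :: 'k::ring_char_0 \<times> 'k)) \<longleftrightarrow> i = j"
  by (simp add: pnat_def prod_eq_iff)

lemma nat_pair_eq_pnat: "nat_pair t \<Longrightarrow> t = pnat (nat_part (fst t), nat_part (snd t))"
  by (simp add: nat_pair_def pnat_def of_nat_nat_part prod_eq_iff)

lemma nat_pair_iff: "nat_pair (t::'k::ring_char_0 \<times> 'k) \<longleftrightarrow> (\<exists>i. t = pnat i)"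
  by (metis nat_pair_eq_pnat nat_pair_pnat)

lemma nat_pair_imp_int_pair: "nat_pair t \<Longrightarrow> int_pair (t::'k::ring_1 \<times> 'k)"
  unfolding nat_pair_def int_pair_def using Nats_subset_Ints by blast

lemma int_pair_add: "int_pair a \<Longrightarrow> int_pair b \<Longrightarrow> int_pair (a + b)"
  by (simp add: int_pair_def)

lemma int_pair_diff: "int_pair a \<Longrightarrow> int_pair b \<Longrightarrow> int_pair (a - b)"
  by (simp add: int_pair_def)

lemma nat_pair_add: "nat_pair a \<Longrightarrow> nat_pair b \<Longrightarrow> nat_pair (a + b)"
  by (simp add: nat_pair_def)

lemma nat_pair_0 [simp]: "nat_pair 0"
  by (simp add: nat_pair_def)

lemma int_pair_0 [simp]: "int_pair 0"
  by (simp add: int_pair_def)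

lemma zw_coeff2_0 [simp]: "zw_coeff2 s 0 = 1"
  by (simp add: zw_coeff2_def)

lemma zw_coeff2_nonzero_imp_nat_pair: "zw_coeff2 s t \<noteq> 0 \<Longrightarrow> nat_pair t"
  by (auto simp: zw_coeff2_def nat_pair_def zw_coeff_def split: if_splits)

lemma zw_coeff2_pnat:
  "zw_coeff2 s (pnat i) = zw_coeff (fst s) (of_nat (fst i)) * zw_coeff (snd s) (of_nat (snd i))"
  by (simp add: zw_coeff2_def)

lemma zw_coeff2_of_nat_nonzero:
  assumes "zw_coeff2 (pnat k) t \<noteq> (0::'k::field_char_0)"
  shows "\<exists>i\<in>{..fst k}\<times>{..snd k}. t = pnat i"
proof -
  from zw_coeff2_nonzero_imp_nat_pair[OF assms] obtain i where t: "t = pnat i"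
    using nat_pair_iff by blast
  have "fst i \<le> fst k" "snd i \<le> snd k"
    using assms t by (auto simp: zw_coeff2_def) (metis gbinomial_of_nat_eq_0 not_le)+
  then show ?thesis using t by (intro bexI[of _ i]) (auto simp: mem_Times_iff)
qed

lemma Sum_any_zw_coeff2_of_nat:
  fixes F :: "'k::field_char_0 \<times> 'k \<Rightarrow> 'k"
  shows "Sum_any (\<lambda>y. F y * zw_coeff2 (pnat k) (x + pnat k - y))
    = (\<Sum>i\<in>{..fst k}\<times>{..snd k}. F (x + pnat k - pnat i) * zw_coeff2 (pnat k) (pnat i))"
proof -
  have "Sum_any (\<lambda>y. F y * zw_coeff2 (pnat k) (x + pnat k - y))
    = (\<Sum>i\<in>{..fst k}\<times>{..snd k}. F (x + pnat k - pnat i) * zw_coeff2 (pnat k) (x + pnat k - (x + pnat k - pnat i)))"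
  proof (rule Sum_any_reindex_finite)
    show "inj_on (\<lambda>i. x + pnat k - pnat i) ({..fst k}\<times>{..snd k})"
      by (auto simp: inj_on_def)
    fix y assume "F y * zw_coeff2 (pnat k) (x + pnat k - y) \<noteq> 0"
    then obtain i where "i\<in>{..fst k}\<times>{..snd k}" "x + pnat k - y = pnat i"
      using zw_coeff2_of_nat_nonzero by (metis mult_eq_0_iff)
    then show "y \<in> (\<lambda>i. x + pnat k - pnat i) ` ({..fst k}\<times>{..snd k})"
      by (intro image_eqI[of _ _ i]) (auto simp: algebra_simps)
  qed auto
  then show ?thesis by simp
qed

lemma Sum_any_zw_coeff2_of_nat_product:
  fixes F1 F2 :: "'k::field_char_0 \<Rightarrow> 'k"
  shows "Sum_any (\<lambda>y. F1 (fst y) * F2 (snd y) * zw_coeff2 (pnat k) (x + pnat k - y))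
    = (\<Sum>i\<le>fst k. F1 (fst x + of_nat (fst k) - of_nat i) * zw_coeff (of_nat (fst k)) (of_nat i))
      * (\<Sum>i\<le>snd k. F2 (snd x + of_nat (snd k) - of_nat i) * zw_coeff (of_nat (snd k)) (of_nat i))"
  unfolding Sum_any_zw_coeff2_of_nat sum_product sum.cartesian_product
  by (rule sum.cong) (auto simp: zw_coeff2_pnat mult_ac simp del: zw_coeff_of_nat)

text \<open>\<open>(z - w)^k (z - w)^(-h-k) = (z - w)^(-h)\<close>, coefficientwise.\<close>

lemma zw_coeff2_convolution:
  fixes h :: "'k::field_char_0 \<times> 'k"
  shows "Sum_any (\<lambda>y. zw_coeff2 (- (h + pnat k)) (y - p - (h + pnat k)) * zw_coeff2 (pnat k) (x + pnat k - y))
    = zw_coeff2 (- h) (x - p - h)"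
proof -
  have conv: "(\<Sum>i\<le>kk. zw_coeff (- (hh + of_nat kk)) (xx + of_nat kk - of_nat i - pp - (hh + of_nat kk))
        * zw_coeff (of_nat kk) (of_nat i))
      = zw_coeff (- hh) (xx - pp - hh)" for kk and xx pp hh :: 'k
    using zw_coeff_Vandermonde[of kk "- (hh + of_nat kk)" "xx - pp - hh"] by (simp add: algebra_simps)
  show ?thesis
    using Sum_any_zw_coeff2_of_nat_product[of
        "\<lambda>u. zw_coeff (- (fst h + of_nat (fst k))) (u - fst p - (fst h + of_nat (fst k)))"
        "\<lambda>u. zw_coeff (- (snd h + of_nat (snd k))) (u - snd p - (snd h + of_nat (snd k)))" k x]
    unfolding conv by (simp add: zw_coeff2_def del: zw_coeff_of_nat)
qed

text \<open>Leibniz rule: \<open>\<partial>\<^sub>z^(j + k) ((z - w)^k g)\<close> and \<open>\<partial>\<^sub>z^j g\<close> agree at \<open>z = w\<close>, coefficientwise.\<close>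

lemma deriv_coeff2_convolution:
  fixes z :: "'k::field_char_0 \<times> 'k"
  shows "Sum_any (\<lambda>y. deriv_coeff2 y (z + pnat k) * zw_coeff2 (pnat k) (x + pnat k - y)) = deriv_coeff2 x z"
proof -
  have conv: "(\<Sum>i\<le>kk. deriv_coeff (xx + of_nat kk - of_nat i) (zz + of_nat kk) * zw_coeff (of_nat kk) (of_nat i))
      = deriv_coeff xx zz" for kk and xx zz :: 'k
    using deriv_coeff_forward_difference[of kk xx zz] by (simp add: algebra_simps)
  show ?thesis
    using Sum_any_zw_coeff2_of_nat_product[of
        "\<lambda>u. deriv_coeff u (fst z + of_nat (fst k))" "\<lambda>u. deriv_coeff u (snd z + of_nat (snd k))" k x]
    unfolding conv by (simp add: deriv_coeff2_def del: zw_coeff_of_nat)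
qed

definition component :: "bool \<Rightarrow> 'k \<times> 'k \<Rightarrow> 'k" where
  "component c x = (if c then snd x else fst x)"
definition unit_vec :: "bool \<Rightarrow> 'k::zero_neq_one \<times> 'k" where
  "unit_vec c = (if c then (0, 1) else (1, 0))"

lemma component_add [simp]: "component c (x + y) = component c x + component c (y::'k::ab_group_add \<times> 'k)" by (simp add: component_def)
lemma component_diff [simp]: "component c (x - y) = component c x - component c (y::'k::ab_group_add \<times> 'k)" by (simp add: component_def)
lemma component_minus [simp]: "component c (- x) = - component c (x::'k::ab_group_add \<times> 'k)" by (simp add: component_def)
lemma component_unit_vec [simp]: "component c' (unit_vec c :: 'k::{ab_group_add,zero_neq_one} \<times> 'k) = (if c' = c then 1 else 0)"
  by (simp add: component_def unit_vec_def)
lemma component_False [simp]: "component False x = fst x" and component_True [simp]: "component True x = snd x"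
  by (simp_all add: component_def)

lemma zw_coeff2_component: "zw_coeff2 s t = zw_coeff (component c s) (component c t) * zw_coeff (component (\<not>c) s) (component (\<not>c) t)"
  by (cases c) (simp_all add: zw_coeff2_def)

lemma nat_pair_component: "nat_pair t \<Longrightarrow> component c t \<in> \<nat>" by (cases c) (simp_all add: nat_pair_def)

lemma nat_pair_antisym: "nat_pair (a::'k::ring_char_0 \<times> 'k) \<Longrightarrow> nat_pair (- a) \<Longrightarrow> a = 0"
proof -
  have *: "x = 0" if "x \<in> \<nat>" "-x \<in> \<nat>" for x :: 'k
  proof -
    from that(1) obtain m where m: "x = of_nat m" by (rule Nats_cases)
    from that(2) obtain n where n: "-x = of_nat n" by (rule Nats_cases)
    have "of_nat (m + n) = (0::'k)" using m n by (metis add.right_inverse of_nat_add)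
    then have "m = 0" by (metis add_is_0 of_nat_eq_0_iff)
    then show ?thesis using \<open>x = of_nat m\<close> by simp
  qed
  assume "nat_pair a" "nat_pair (- a)"
  then show ?thesis using * by (simp add: nat_pair_def prod_eq_iff)
qed

lemma nat_pair_minimal:
  fixes S :: "('k::ring_char_0 \<times> 'k) set"
  assumes "finite S" "S \<noteq> {}"
  obtains x0 where "x0 \<in> S" "\<And>y. y \<in> S \<Longrightarrow> nat_pair (y - x0) \<Longrightarrow> y = x0"
proof -
  let ?up = "\<lambda>x. {y\<in>S. nat_pair (y - x)}"
  obtain x1 where "x1 \<in> S" using assms(2) by blast
  then obtain x0 where x0: "x0 \<in> S" and least: "\<And>y. y \<in> S \<Longrightarrow> card (?up x0) \<le> card (?up y)"
    using ex_has_least_nat[of "\<lambda>x. x \<in> S" x1 "\<lambda>x. card (?up x)"] by auto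
  have "y = x0" if y: "y \<in> S" "nat_pair (y - x0)" for y
  proof (rule ccontr)
    assume ne: "y \<noteq> x0"
    have "?up y \<subseteq> ?up x0"
    proof
      fix z assume z: "z \<in> ?up y"
      then have "nat_pair (z - y)" by simp
      then have "nat_pair ((z - y) + (y - x0))" using y(2) by (rule nat_pair_add)
      then have "nat_pair (z - x0)" by (simp add: algebra_simps)
      with z show "z \<in> ?up x0" by simp
    qed
    moreover have "x0 \<notin> ?up y"
    proof
      assume "x0 \<in> ?up y"
      then have "nat_pair (- (y - x0))" by (simp add: algebra_simps)
      then have "y - x0 = 0" using nat_pair_antisym y(2) by blast
      then show False using ne by simp
    qed
    moreover have "x0 \<in> ?up x0" using x0 by simp
    ultimately have "?up y \<subset> ?up x0" by blast
    then have "card (?up y) < card (?up x0)" using assms(1) by (intro psubset_card_mono) auto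
    with least[OF y(1)] show False by simp
  qed
  with x0 show ?thesis by (rule that)
qed

lemma nat_pair_diag_minus:
  fixes z :: "'k::ring_char_0 \<times> 'k"
  assumes "int_pair z" "nat (int_part (fst z)) \<le> M" "nat (int_part (snd z)) \<le> M"
  shows "nat_pair ((of_nat M, of_nat M) - z)"
proof -
  have *: "of_nat M - x \<in> \<nat>" if "x \<in> \<int>" "nat (int_part x) \<le> M" for x :: 'k
  proof -
    have "of_nat M - x = of_int (int M - int_part x)" using that(1) by (simp add: of_int_int_part)
    also have "\<dots> = of_nat (nat (int M - int_part x))" using that(2) by simp
    finally show ?thesis by simp
  qed
  show ?thesis using assms unfolding nat_pair_def int_pair_def by (auto intro!: *)
qed

lemma int_pairs_bounded_above:
  assumes "finite Z" "\<forall>z\<in>Z. int_pair z"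
  shows "\<exists>M::nat. \<forall>z\<in>Z. nat_pair ((of_nat M, of_nat M) - (z::'k::ring_char_0 \<times> 'k))"
proof (intro exI ballI)
  let ?M = "Max ((\<lambda>z::'k \<times> 'k. max (nat (int_part (fst z))) (nat (int_part (snd z)))) ` Z)"
  fix z assume "z \<in> Z"
  have "max (nat (int_part (fst z))) (nat (int_part (snd z))) \<le> ?M"
    using assms(1) \<open>z \<in> Z\<close> by (intro Max_ge) auto
  then have "nat (int_part (fst z)) \<le> ?M" "nat (int_part (snd z)) \<le> ?M" by simp_all
  then show "nat_pair ((of_nat ?M, of_nat ?M) - z)"
    using assms(2) \<open>z \<in> Z\<close> by (intro nat_pair_diag_minus) auto
qed

lemma int_pairs_common_shift:
  fixes h :: "'l \<Rightarrow> 'k::ring_char_0 \<times> 'k"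
  assumes "finite G" "\<forall>l\<in>G. int_pair (h l)"
  obtains K k where "\<forall>l\<in>G. h l + pnat (k l) = pnat K"
proof -
  obtain M where M: "\<forall>z\<in>h ` G. nat_pair ((of_nat M, of_nat M) - z)"
    using int_pairs_bounded_above[of "h ` G"] assms by auto
  define k where "k = (\<lambda>l. (nat_part (fst ((of_nat M, of_nat M) - h l)), nat_part (snd ((of_nat M, of_nat M) - h l))))"
  have "(of_nat M, of_nat M) - h l = pnat (k l)" if "l \<in> G" for l
    unfolding k_def using M that by (intro nat_pair_eq_pnat) auto
  then have "h l + pnat (k l) = pnat (M, M)" if "l \<in> G" for l
    using that by (metis add.commute diff_add_cancel pnat_Pair)
  then show thesis using that by blast
qed

lemma deriv_coeff2_nonzero_imp_nat_pair: "deriv_coeff2 x k \<noteq> 0 \<Longrightarrow> nat_pair k"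
  by (auto simp: deriv_coeff2_def deriv_coeff_def nat_pair_def split: if_splits)

lemma finite_pnat_summands: "finite {i::nat \<times> nat. \<exists>j. pnat i + pnat j = (D::'k::ring_char_0 \<times> 'k)}"
proof (cases "\<exists>i j. pnat i + pnat j = D")
  case False
  then have "{i::nat \<times> nat. \<exists>j. pnat i + pnat j = D} = {}" by blast
  then show ?thesis by (simp only:) simp
next
  case True
  then obtain i0 j0 where "pnat i0 + pnat j0 = D" by blast
  have "{i::nat \<times> nat. \<exists>j. pnat i + pnat j = D} \<subseteq> {..fst i0 + fst j0} \<times> {..snd i0 + snd j0}"
  proof
    fix i assume "i \<in> {i::nat \<times> nat. \<exists>j. pnat i + pnat j = D}"
    then obtain j where "pnat i + pnat j = D" by blast
    then have "pnat i + pnat j = (pnat i0 + pnat j0 :: 'k \<times> 'k)" using \<open>pnat i0 + pnat j0 = D\<close> by simp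
    then have "of_nat (fst i + fst j) = (of_nat (fst i0 + fst j0) :: 'k)" "of_nat (snd i + snd j) = (of_nat (snd i0 + snd j0) :: 'k)"
      by (simp_all add: prod_eq_iff)
    then have "fst i + fst j = fst i0 + fst j0" "snd i + snd j = snd i0 + snd j0" using of_nat_eq_iff by blast+
    then show "i \<in> {..fst i0 + fst j0} \<times> {..snd i0 + snd j0}" by (auto simp: mem_Times_iff)
  qed
  then show ?thesis by (rule finite_subset) simp
qed

lemma finite_nat_pair_diff_pnat: "finite {j::nat \<times> nat. nat_pair (k - pnat j :: 'k::ring_char_0 \<times> 'k)}"
proof (cases "nat_pair k")
  case False
  have "{j::nat \<times> nat. nat_pair (k - pnat j)} = {}"
  proof (rule ccontr)
    assume "{j::nat \<times> nat. nat_pair (k - pnat j)} \<noteq> {}"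
    then obtain j where "nat_pair (k - pnat j)" by blast
    then have "nat_pair ((k - pnat j) + pnat j)" by (intro nat_pair_add) simp_all
    then show False using False by simp
  qed
  then show ?thesis by (simp only:) simp
next
  case True
  then obtain K where K: "k = pnat K" using nat_pair_iff by blast
  have "{j::nat \<times> nat. nat_pair (k - pnat j)} \<subseteq> {..fst K} \<times> {..snd K}"
  proof
    fix j assume "j \<in> {j::nat \<times> nat. nat_pair (k - pnat j)}"
    then have "(of_nat (fst K) - of_nat (fst j) :: 'k) \<in> \<nat>" "(of_nat (snd K) - of_nat (snd j) :: 'k) \<in> \<nat>"
      using K by (simp_all add: nat_pair_def)
    then show "j \<in> {..fst K} \<times> {..snd K}" by (simp add: Nats_diff_of_nat mem_Times_iff)
  qed
  then show ?thesis by (rule finite_subset) simp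
qed

text \<open>Coefficientwise form of the Taylor expansion of \<open>\<partial>\<^sub>z^K c(w, z)\<close> around \<open>z = w\<close>.\<close>

lemma alternating_deriv_coeff2_convolution:
  fixes p :: "'k::field_char_0 \<times> 'k"
  shows "(\<Sum>j\<in>{..fst K}\<times>{..snd K}. (-1) ^ (fst j + snd j) * deriv_coeff2 (p + pnat j) (pnat j)
       * deriv_coeff2 y (pnat K - pnat j))
   = (-1) ^ (fst K + snd K) * deriv_coeff2 (p + pnat K - y) (pnat K)"
proof -
  have "(\<Sum>j\<in>{..fst K}\<times>{..snd K}. (-1) ^ (fst j + snd j) * deriv_coeff2 (p + pnat j) (pnat j)
       * deriv_coeff2 y (pnat K - pnat j))
     = (\<Sum>j\<in>{..fst K}\<times>{..snd K}. ((-1) ^ fst j * ((fst p + of_nat (fst j)) gchoose fst j) * (fst y gchoose (fst K - fst j)))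
         * ((-1) ^ snd j * ((snd p + of_nat (snd j)) gchoose snd j) * (snd y gchoose (snd K - snd j))))"
  proof (rule sum.cong)
    fix j assume "j \<in> {..fst K}\<times>{..snd K}"
    then have "of_nat (fst K) - of_nat (fst j) = (of_nat (fst K - fst j) :: 'k)"
      "of_nat (snd K) - of_nat (snd j) = (of_nat (snd K - snd j) :: 'k)"
      by (auto simp: of_nat_diff mem_Times_iff)
    then show "(-1) ^ (fst j + snd j) * deriv_coeff2 (p + pnat j) (pnat j) * deriv_coeff2 y (pnat K - pnat j)
      = ((-1) ^ fst j * ((fst p + of_nat (fst j)) gchoose fst j) * (fst y gchoose (fst K - fst j)))
         * ((-1) ^ snd j * ((snd p + of_nat (snd j)) gchoose snd j) * (snd y gchoose (snd K - snd j)))"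
      by (simp add: deriv_coeff2_def power_add mult_ac)
  qed simp
  also have "\<dots> = (\<Sum>a\<le>fst K. (-1) ^ a * ((fst p + of_nat a) gchoose a) * (fst y gchoose (fst K - a)))
     * (\<Sum>b\<le>snd K. (-1) ^ b * ((snd p + of_nat b) gchoose b) * (snd y gchoose (snd K - b)))"
    unfolding sum_product sum.cartesian_product by (rule sum.cong) auto
  also have "\<dots> = (-1) ^ (fst K + snd K) * deriv_coeff2 (p + pnat K - y) (pnat K)"
    unfolding alternating_gbinomial_convolution by (simp add: deriv_coeff2_def power_add mult_ac)
  finally show ?thesis .
qed

fun euler_block :: "bool \<Rightarrow> 'k::ring_1 \<Rightarrow> nat \<Rightarrow> (bool \<times> 'k) list" where
  "euler_block c l0 0 = []"
| "euler_block c l0 (Suc J) = (c, l0 - of_nat J) # euler_block c l0 J"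

lemma euler_block_set: "(c', l) \<in> set (euler_block c l0 J) \<Longrightarrow> c' = c \<and> (\<exists>j. l = l0 - of_nat j)"
  by (induction J) auto

lemma psub_psub_1_1: "psub (psub (h::'k::ring_1 \<times> 'k) (1, 1)) n = h - (n + (1, 1))"
  by (simp add: psub_eq algebra_simps)

lemma neg1_pow_pneg:
  fixes n h :: "'k::field_char_0 \<times> 'k" and K :: "nat \<times> nat"
  assumes "fst n - snd n \<in> \<int>" "h = n + (1, 1) + pnat K"
  shows "neg1_pow (fst (pneg h) - snd (pneg h)) = neg1_pow (fst n - snd n) * (-1) ^ (fst K + snd K :: nat)"
proof -
  obtain N where N: "fst n - snd n = (of_int N :: 'k)" using assms(1) by (auto elim!: Ints_cases)
  have "fst (pneg h) - snd (pneg h) = - (fst n - snd n) - of_nat (fst K) + of_nat (snd K)"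
    using assms(2) by (simp add: pneg_def algebra_simps)
  also have "\<dots> = of_int (- N - int (fst K) + int (snd K))" using N by simp
  finally have e: "fst (pneg h) - snd (pneg h) = of_int (- N - int (fst K) + int (snd K))" .
  have "even (- N - int (fst K) + int (snd K)) \<longleftrightarrow> even (N + int (fst K + snd K))"
  proof -
    have "N + int (fst K + snd K) = (- N - int (fst K) + int (snd K)) + 2 * (N + int (fst K))" by simp
    then show ?thesis by (metis dvd_add_left_iff dvd_triv_left)
  qed
  then show ?thesis unfolding neg1_pow_def e N int_part_of_int power_int_minus_left
    by (auto simp: even_add even_of_nat)
qed

lemma deriv1_apply: "deriv1 sc (pnat j) F p v = sc (deriv_coeff2 (p + pnat j) (pnat j)) (F (p + pnat j) v)"
  by (simp add: deriv1_def ddiv_def deriv_coeff2_def padd_eq)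

section \<open>Slices of homogeneous series\<close>

locale vector_space_char_0 = vector_space sc for sc :: "'k::field_char_0 \<Rightarrow> 'v::ab_group_add \<Rightarrow> 'v"
begin

text \<open>A two-variable series that is homogeneous of total degree \<open>e\<close> is recorded by its slice
  \<open>g\<close>, \<open>g x\<close> being the coefficient of \<open>z^x w^(e - x)\<close>. Then \<open>zw_expand r g p\<close> is the coefficient
  of \<open>z^p\<close> in \<open>(z - w)^(-r)\<close> (expanded in powers of \<open>w\<close>) times that series, \<open>diag_deriv k g\<close>
  is its divided derivative \<open>\<partial>\<^sub>z^k\<close> restricted to \<open>z = w\<close>, and \<open>zw_mult k g\<close> is the
  slice of its product with \<open>(z - w)^k\<close>.\<close>

definition zw_expand :: "'k \<times> 'k \<Rightarrow> ('k \<times> 'k \<Rightarrow> 'v) \<Rightarrow> 'k \<times> 'k \<Rightarrow> 'v" where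
  "zw_expand r g p = Sum_any (\<lambda>x. sc (zw_coeff2 (- r) (x - p - r)) (g x))"

definition diag_deriv :: "'k \<times> 'k \<Rightarrow> ('k \<times> 'k \<Rightarrow> 'v) \<Rightarrow> 'v" where
  "diag_deriv k g = Sum_any (\<lambda>x. sc (deriv_coeff2 x k) (g x))"

definition zw_mult :: "nat \<times> nat \<Rightarrow> ('k \<times> 'k \<Rightarrow> 'v) \<Rightarrow> 'k \<times> 'k \<Rightarrow> 'v" where
  "zw_mult k g y = Sum_any (\<lambda>x. sc (zw_coeff2 (pnat k) (x + pnat k - y)) (g x))"

lemma Sum_any_scale_superset:
  assumes "finite S" "{x. g x \<noteq> 0} \<subseteq> S"
  shows "Sum_any (\<lambda>x. sc (f x) (g x)) = (\<Sum>x\<in>S. sc (f x) (g x))"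
  using assms by (intro Sum_any.expand_superset) auto

definition box_image :: "nat \<times> nat \<Rightarrow> ('k \<times> 'k) set \<Rightarrow> ('k \<times> 'k) set" where
  "box_image k S = (\<lambda>(x, i). x + pnat k - pnat i) ` (S \<times> ({..fst k}\<times>{..snd k}))"

lemma finite_box_image: "finite S \<Longrightarrow> finite (box_image k S)"
  unfolding box_image_def by auto

lemma zw_coeff2_nonzero_box_image:
  assumes "zw_coeff2 (pnat k) (x + pnat k - y) \<noteq> 0" "x \<in> S"
  shows "y \<in> box_image k S"
proof -
  obtain i where "i \<in> {..fst k}\<times>{..snd k}" "x + pnat k - y = pnat i"
    using zw_coeff2_of_nat_nonzero assms(1) by blast
  then show ?thesis unfolding box_image_def
    using assms(2) by (intro image_eqI[of _ _ "(x, i)"]) (auto simp: algebra_simps)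
qed

lemma zw_mult_support_subset: "{y. zw_mult k g y \<noteq> 0} \<subseteq> box_image k {x. g x \<noteq> 0}"
proof
  fix y assume "y \<in> {y. zw_mult k g y \<noteq> 0}"
  then obtain x where "sc (zw_coeff2 (pnat k) (x + pnat k - y)) (g x) \<noteq> 0"
    unfolding zw_mult_def using Sum_any.not_neutral_obtains_not_neutral by blast
  then show "y \<in> box_image k {x. g x \<noteq> 0}" by (auto intro: zw_coeff2_nonzero_box_image)
qed

lemma fin_supp_zw_mult: "fin_supp g \<Longrightarrow> fin_supp (zw_mult k g)"
  unfolding fin_supp_def using zw_mult_support_subset finite_box_image finite_subset by metis

lemma Sum_any_scale_zw_mult:
  assumes "fin_supp g"
  shows "Sum_any (\<lambda>y. sc (A y) (zw_mult k g y))
       = Sum_any (\<lambda>x. sc (Sum_any (\<lambda>y. A y * zw_coeff2 (pnat k) (x + pnat k - y))) (g x))"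
proof -
  let ?S = "{x. g x \<noteq> 0}"
  let ?S' = "box_image k ?S"
  have fS: "finite ?S" using assms by (simp add: fin_supp_def)
  have fS': "finite ?S'" using fS by (rule finite_box_image)
  have "Sum_any (\<lambda>y. sc (A y) (zw_mult k g y)) = (\<Sum>y\<in>?S'. sc (A y) (zw_mult k g y))"
    using fS' zw_mult_support_subset by (rule Sum_any_scale_superset)
  also have "\<dots> = (\<Sum>y\<in>?S'. \<Sum>x\<in>?S. sc (A y * zw_coeff2 (pnat k) (x + pnat k - y)) (g x))"
    unfolding zw_mult_def Sum_any_scale_superset[OF fS subset_refl] by (simp add: scale_sum_right)
  also have "\<dots> = (\<Sum>x\<in>?S. \<Sum>y\<in>?S'. sc (A y * zw_coeff2 (pnat k) (x + pnat k - y)) (g x))"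
    by (rule sum.swap)
  also have "\<dots> = (\<Sum>x\<in>?S. sc (Sum_any (\<lambda>y. A y * zw_coeff2 (pnat k) (x + pnat k - y))) (g x))"
  proof (rule sum.cong)
    fix x assume "x \<in> ?S"
    then have "Sum_any (\<lambda>y. A y * zw_coeff2 (pnat k) (x + pnat k - y))
        = (\<Sum>y\<in>?S'. A y * zw_coeff2 (pnat k) (x + pnat k - y))"
      by (intro Sum_any.expand_superset[OF fS']) (auto intro: zw_coeff2_nonzero_box_image)
    then show "(\<Sum>y\<in>?S'. sc (A y * zw_coeff2 (pnat k) (x + pnat k - y)) (g x))
        = sc (Sum_any (\<lambda>y. A y * zw_coeff2 (pnat k) (x + pnat k - y))) (g x)"
      by (simp add: scale_sum_left)
  qed simp
  also have "\<dots> = Sum_any (\<lambda>x. sc (Sum_any (\<lambda>y. A y * zw_coeff2 (pnat k) (x + pnat k - y))) (g x))"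
    using fS by (rule Sum_any_scale_superset[symmetric]) simp
  finally show ?thesis .
qed

lemma zw_expand_zw_mult:
  assumes "fin_supp g"
  shows "zw_expand (h + pnat k) (zw_mult k g) p = zw_expand h g p"
  unfolding zw_expand_def Sum_any_scale_zw_mult[OF assms] zw_coeff2_convolution ..

lemma diag_deriv_zw_mult:
  assumes "fin_supp g"
  shows "diag_deriv (z + pnat k) (zw_mult k g) = diag_deriv z g"
  unfolding diag_deriv_def Sum_any_scale_zw_mult[OF assms] deriv_coeff2_convolution ..

definition pairing :: "('k \<times> 'k \<Rightarrow> 'k) \<Rightarrow> ('k \<times> 'k \<Rightarrow> 'v) \<Rightarrow> 'v" where
  "pairing f g = Sum_any (\<lambda>x. sc (f x) (g x))"

lemma pairing_eq_sum: "fin_supp g \<Longrightarrow> pairing f g = (\<Sum>x\<in>{x. g x \<noteq> 0}. sc (f x) (g x))"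
  unfolding pairing_def fin_supp_def by (rule Sum_any_scale_superset) auto

lemma scale_pairing: "fin_supp g \<Longrightarrow> sc a (pairing f g) = pairing (\<lambda>x. a * f x) g"
  by (simp add: pairing_eq_sum scale_sum_right)

lemma pairing_add: "fin_supp g \<Longrightarrow> pairing f g + pairing f' g = pairing (\<lambda>x. f x + f' x) g"
  by (simp add: pairing_eq_sum sum.distrib[symmetric] scale_left_distrib)

lemma pairing_diff: "fin_supp g \<Longrightarrow> pairing f g - pairing f' g = pairing (\<lambda>x. f x - f' x) g"
  by (simp add: pairing_eq_sum sum_subtractf[symmetric] scale_left_diff_distrib)

lemma pairing_cong: "(\<And>x. g x \<noteq> 0 \<Longrightarrow> f x = f' x) \<Longrightarrow> pairing f g = pairing f' g"
  unfolding pairing_def by (rule Sum_any.cong) (metis scale_zero_right)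

lemma Sum_any_shift_pairing:
  fixes e :: "'k \<times> 'k"
  shows "Sum_any (\<lambda>y. sc (f y) (g (y - e))) = pairing (\<lambda>x. f (x + e)) g"
  unfolding pairing_def
proof (rule Sum_any.reindex_cong[of "\<lambda>x. x + e"])
  show "bij (\<lambda>x::'k\<times>'k. x + e)"
    by (rule bij_betw_byWitness[of _ "\<lambda>x. x - e"]) auto
qed (simp add: fun_eq_iff)

lemma zw_expand_eq_pairing: "zw_expand r g p = pairing (\<lambda>x. zw_coeff2 (- r) (x - p - r)) g"
  unfolding zw_expand_def pairing_def ..

lemma fin_supp_shift: "fin_supp (g :: 'k \<times> 'k \<Rightarrow> 'v) \<Longrightarrow> fin_supp (\<lambda>y. g (y - e))"
proof -
  assume "fin_supp g"
  have "{y. g (y - e) \<noteq> 0} \<subseteq> (\<lambda>x. x + e) ` {x. g x \<noteq> 0}"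
  proof
    fix y assume "y \<in> {y. g (y - e) \<noteq> 0}"
    then show "y \<in> (\<lambda>x. x + e) ` {x. g x \<noteq> 0}" by (intro image_eqI[of _ _ "y - e"]) auto
  qed
  then show ?thesis using \<open>fin_supp g\<close> unfolding fin_supp_def by (meson finite_imageI finite_subset)
qed

lemma fin_supp_add: "fin_supp (g :: 'a \<Rightarrow> 'v) \<Longrightarrow> fin_supp g' \<Longrightarrow> fin_supp (\<lambda>x. g x + g' x)"
  unfolding fin_supp_def by (rule finite_subset[of _ "{x. g x \<noteq> 0} \<union> {x. g' x \<noteq> 0}"]) auto

lemma fin_supp_scale: "fin_supp (g :: 'a \<Rightarrow> 'v) \<Longrightarrow> fin_supp (\<lambda>x. sc (f x) (g x))"
  unfolding fin_supp_def by (rule finite_subset[of _ "{x. g x \<noteq> 0}"]) auto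

lemma fin_supp_sum: "finite L \<Longrightarrow> (\<And>l. l \<in> L \<Longrightarrow> fin_supp (g l :: 'a \<Rightarrow> 'v)) \<Longrightarrow> fin_supp (\<lambda>x. \<Sum>l\<in>L. g l x)"
proof (induction L rule: finite_induct)
  case empty then show ?case by (simp add: fin_supp_def)
next
  case (insert a F) then show ?case by (simp add: fin_supp_add)
qed

lemma scale_Sum_any: "sc a (Sum_any f) = Sum_any (\<lambda>x. sc a (f x))"
proof (cases "a = 0")
  case True then show ?thesis by simp
next
  case False
  then have "{x. sc a (f x) \<noteq> 0} = {x. f x \<noteq> 0}" by auto
  then show ?thesis by (simp add: Sum_any.expand_set scale_sum_right)
qed

lemma linear_scale_comp:
  assumes "Vector_Spaces.linear sc sc f"
  shows "Vector_Spaces.linear sc sc (\<lambda>v. sc k (f v))"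
  using assms unfolding Vector_Spaces.linear_iff by (simp add: scale_right_distrib scale_left_commute)

section \<open>Euler operators\<close>

text \<open>\<open>euler b c l\<close> is a first-order differential operator in the \<open>c\<close>-component of \<open>z\<close>,
  acting on coefficient functions. It commutes with multiplication by \<open>(z - w)^(-r)\<close>, where it
  becomes \<open>euler_slice b c l r\<close> (\<open>euler_zw_expand\<close>). On slices whose \<open>c\<close>-exponents lie in
  \<open>b + r - \<nat>\<close> a block of these operators with \<open>l \<in> r - \<nat>\<close> annihilates the slice, while every
  operator with \<open>l \<notin> r + \<int>\<close> is injective: this separates exponents \<open>r\<close> modulo \<open>\<int>\<^sup>2\<close>.\<close>

definition euler :: "'k \<times> 'k \<Rightarrow> bool \<Rightarrow> 'k \<Rightarrow> ('k \<times> 'k \<Rightarrow> 'v) \<Rightarrow> 'k \<times> 'k \<Rightarrow> 'v" where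
  "euler b c l Y p = sc (component c p - component c b - l) (Y p) - sc (component c p - 1 - component c b) (Y (p - unit_vec c))"

definition euler_slice :: "'k \<times> 'k \<Rightarrow> bool \<Rightarrow> 'k \<Rightarrow> 'k \<times> 'k \<Rightarrow> ('k \<times> 'k \<Rightarrow> 'v) \<Rightarrow> 'k \<times> 'k \<Rightarrow> 'v" where
  "euler_slice b c l r g y = sc (component c b + component c r - component c y + 1) (g (y - unit_vec c)) + sc (component c y - component c b - l) (g y)"

lemma fin_supp_euler_slice: "fin_supp g \<Longrightarrow> fin_supp (euler_slice b c l r g)"
  unfolding euler_slice_def by (intro fin_supp_add fin_supp_scale fin_supp_shift)

lemma euler_coeff_identity:
  "(component c p - component c b - l) * zw_coeff2 (- r) (x - p - r) - (component c p - 1 - component c b) * zw_coeff2 (- r) (x + unit_vec c - p - r)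
   = zw_coeff2 (- r) (x + unit_vec c - p - r) * (component c b + component c r - component c (x + unit_vec c) + 1)
     + zw_coeff2 (- r) (x - p - r) * (component c x - component c b - l)"
proof -
  define t where "t = component c x - component c p - component c r"
  define Q where "Q = zw_coeff (component (\<not>c) (- r)) (component (\<not>c) (x - p - r))"
  define N0 where "N0 = zw_coeff (- component c r) t"
  define N1 where "N1 = zw_coeff (- component c r) (t + 1)"
  have e1: "component c (x + unit_vec c - p - r) = t + 1" by (simp add: t_def)
  have e2: "component (\<not>c) (x + unit_vec c - p - r) = component (\<not>c) (x - p - r)" by simp
  have st: "(t + 1) * N1 = (t - (- component c r)) * N0" unfolding N0_def N1_def by (rule zw_coeff_recurrence)
  have A: "zw_coeff2 (- r) (x - p - r) = N0 * Q"
    unfolding N0_def Q_def t_def by (subst zw_coeff2_component[of _ _ c]) simp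
  have B: "zw_coeff2 (- r) (x + unit_vec c - p - r) = N1 * Q"
    unfolding N1_def Q_def by (subst zw_coeff2_component[of _ _ c]) (simp only: e1 e2 component_minus)
  have C: "component c (x + unit_vec c) = component c x + 1" by simp
  have D: "(component c p - component c b - l) * (N0 * Q) - (component c p - 1 - component c b) * (N1 * Q)
     - (N1 * Q * (component c b + component c r - (component c x + 1) + 1) + N0 * Q * (component c x - component c b - l))
     = Q * ((t + 1) * N1 - (t - (- component c r)) * N0)"
    unfolding t_def by (simp add: algebra_simps)
  show ?thesis unfolding A B C using D st by simp
qed

lemma euler_zw_expand:
  assumes "fin_supp g"
  shows "euler b c l (zw_expand r g) p = zw_expand r (euler_slice b c l r g) p"
proof -
  let ?N = "\<lambda>x. zw_coeff2 (- r) (x - p - r)"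
  have "euler b c l (zw_expand r g) p = sc (component c p - component c b - l) (pairing ?N g) - sc (component c p - 1 - component c b) (pairing (\<lambda>x. zw_coeff2 (- r) (x - (p - unit_vec c) - r)) g)"
    unfolding euler_def zw_expand_eq_pairing ..
  also have "\<dots> = pairing (\<lambda>x. (component c p - component c b - l) * ?N x - (component c p - 1 - component c b) * zw_coeff2 (- r) (x - (p - unit_vec c) - r)) g"
    by (simp only: scale_pairing[OF assms] pairing_diff[OF assms])
  also have "\<dots> = pairing (\<lambda>x. zw_coeff2 (- r) (x + unit_vec c - p - r) * (component c b + component c r - component c (x + unit_vec c) + 1)
     + ?N x * (component c x - component c b - l)) g"
    by (rule pairing_cong) (simp only: diff_diff_eq2 euler_coeff_identity)
  also have "\<dots> = pairing (\<lambda>x. ?N (x + unit_vec c) * (component c b + component c r - component c (x + unit_vec c) + 1)) g + pairing (\<lambda>x. ?N x * (component c x - component c b - l)) g"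
    by (simp only: pairing_add[OF assms])
  also have "pairing (\<lambda>x. ?N (x + unit_vec c) * (component c b + component c r - component c (x + unit_vec c) + 1)) g
      = Sum_any (\<lambda>y. sc (?N y * (component c b + component c r - component c y + 1)) (g (y - unit_vec c)))"
    by (rule Sum_any_shift_pairing[symmetric])
  also have "pairing (\<lambda>x. ?N x * (component c x - component c b - l)) g = Sum_any (\<lambda>y. sc (?N y * (component c y - component c b - l)) (g y))"
    unfolding pairing_def ..
  also have "Sum_any (\<lambda>y. sc (?N y * (component c b + component c r - component c y + 1)) (g (y - unit_vec c))) + Sum_any (\<lambda>y. sc (?N y * (component c y - component c b - l)) (g y))
     = Sum_any (\<lambda>y. sc (?N y * (component c b + component c r - component c y + 1)) (g (y - unit_vec c)) + sc (?N y * (component c y - component c b - l)) (g y))"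
  proof (rule Sum_any.distrib[symmetric])
    have f1: "fin_supp (\<lambda>y. g (y - unit_vec c))" by (rule fin_supp_shift[OF assms])
    show "finite {y. sc (?N y * (component c b + component c r - component c y + 1)) (g (y - unit_vec c)) \<noteq> 0}"
      using fin_supp_scale[OF f1, of "\<lambda>y. ?N y * (component c b + component c r - component c y + 1)"] unfolding fin_supp_def by simp
    show "finite {y. sc (?N y * (component c y - component c b - l)) (g y) \<noteq> 0}"
      using fin_supp_scale[OF assms, of "\<lambda>y. ?N y * (component c y - component c b - l)"] unfolding fin_supp_def by simp
  qed
  also have "\<dots> = zw_expand r (euler_slice b c l r g) p"
    unfolding zw_expand_def euler_slice_def by (simp only: scale_right_distrib scale_scale)
  finally show ?thesis .
qed

fun eulers :: "'k \<times> 'k \<Rightarrow> (bool \<times> 'k) list \<Rightarrow> ('k \<times> 'k \<Rightarrow> 'v) \<Rightarrow> 'k \<times> 'k \<Rightarrow> 'v" where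
  "eulers b [] Y = Y"
| "eulers b ((c, l) # ops) Y = eulers b ops (euler b c l Y)"

fun eulers_slice :: "'k \<times> 'k \<Rightarrow> 'k \<times> 'k \<Rightarrow> (bool \<times> 'k) list \<Rightarrow> ('k \<times> 'k \<Rightarrow> 'v) \<Rightarrow> 'k \<times> 'k \<Rightarrow> 'v" where
  "eulers_slice b r [] g = g"
| "eulers_slice b r ((c, l) # ops) g = eulers_slice b r ops (euler_slice b c l r g)"

lemma euler_add: "euler b c l (\<lambda>p. Y p + Z p) = (\<lambda>p. euler b c l Y p + euler b c l Z p)"
  by (simp add: euler_def fun_eq_iff scale_right_distrib algebra_simps)

lemma euler_sum: "euler b c l (\<lambda>p. \<Sum>i\<in>L. Y i p) = (\<lambda>p. \<Sum>i\<in>L. euler b c l (Y i) p)"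
  by (simp add: euler_def fun_eq_iff scale_sum_right sum_subtractf)

lemma eulers_add: "eulers b ops (\<lambda>p. Y p + Z p) = (\<lambda>p. eulers b ops Y p + eulers b ops Z p)"
  by (induction ops arbitrary: Y Z) (auto simp: euler_add)

lemma eulers_sum: "eulers b ops (\<lambda>p. \<Sum>i\<in>L. Y i p) = (\<lambda>p. \<Sum>i\<in>L. eulers b ops (Y i) p)"
  by (induction ops arbitrary: Y) (auto simp: euler_sum)

lemma eulers_zero: "eulers b ops (\<lambda>p. 0) = (\<lambda>p. 0)"
  using eulers_sum[of b ops "\<lambda>i p. 0" "{}"] by simp

lemma fin_supp_eulers_slice: "fin_supp g \<Longrightarrow> fin_supp (eulers_slice b r ops g)"
  by (induction ops arbitrary: g) (auto simp: fin_supp_euler_slice)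

lemma eulers_zw_expand: "fin_supp g \<Longrightarrow> eulers b ops (zw_expand r g) = zw_expand r (eulers_slice b r ops g)"
proof (induction ops arbitrary: g)
  case Nil then show ?case by simp
next
  case (Cons a ops)
  obtain c l where a: "a = (c, l)" by (cases a)
  have "euler b c l (zw_expand r g) = zw_expand r (euler_slice b c l r g)" using euler_zw_expand[OF Cons.prems] by (simp add: fun_eq_iff)
  then show ?case using a Cons.IH[OF fin_supp_euler_slice[OF Cons.prems]] by simp
qed

lemma euler_slice_zero: "euler_slice b c l r (\<lambda>x. 0) = (\<lambda>x. 0)" by (simp add: euler_slice_def fun_eq_iff)
lemma eulers_slice_zero: "eulers_slice b r ops (\<lambda>x. 0) = (\<lambda>x. 0)"
  by (induction ops) (auto simp: euler_slice_zero)

lemma eulers_slice_append: "eulers_slice b r (o1 @ o2) g = eulers_slice b r o2 (eulers_slice b r o1 g)"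
  by (induction o1 arbitrary: g) auto

lemma zw_expand_zero: "zw_expand r (\<lambda>x. 0) p = 0" by (simp add: zw_expand_def)

definition depth_below :: "'k \<times> 'k \<Rightarrow> bool \<Rightarrow> 'k \<times> 'k \<Rightarrow> nat \<Rightarrow> ('k \<times> 'k \<Rightarrow> 'v) \<Rightarrow> bool" where
  "depth_below b c r J g \<longleftrightarrow> (\<forall>x. g x \<noteq> 0 \<longrightarrow> (\<exists>j<J. component c b + component c r - component c x = of_nat j))"
definition depth_finite :: "'k \<times> 'k \<Rightarrow> bool \<Rightarrow> 'k \<times> 'k \<Rightarrow> ('k \<times> 'k \<Rightarrow> 'v) \<Rightarrow> bool" where
  "depth_finite b c r g \<longleftrightarrow> (\<forall>x. g x \<noteq> 0 \<longrightarrow> component c b + component c r - component c x \<in> \<nat>)"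

lemma euler_slice_nonzero:
  assumes "euler_slice b c l r g y \<noteq> 0"
  shows "(component c b + component c r - component c y + 1 \<noteq> 0 \<and> g (y - unit_vec c) \<noteq> 0) \<or> (component c y - component c b - l \<noteq> 0 \<and> g y \<noteq> 0)"
  using assms unfolding euler_slice_def by (metis add.right_neutral add_0 scale_eq_0_iff)

lemma component_diff_unit_vec: "component c' ((y::'k \<times> 'k) - unit_vec c) = (if c' = c then component c' y - 1 else component c' y)"
  by (cases c; cases c') (simp_all add: component_def unit_vec_def)

lemma euler_slice_depth_below:
  assumes "depth_below b c r J g" shows "depth_below b c r J (euler_slice b c' l r g)"
  unfolding depth_below_def
proof (intro allI impI)
  fix y assume "euler_slice b c' l r g y \<noteq> 0"
  then consider "component c' b + component c' r - component c' y + 1 \<noteq> 0" "g (y - unit_vec c') \<noteq> 0" | "g y \<noteq> 0"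
    using euler_slice_nonzero by blast
  then show "\<exists>j<J. component c b + component c r - component c y = of_nat j"
  proof cases
    case 1
    then obtain j where j: "j < J" "component c b + component c r - component c (y - unit_vec c') = of_nat j"
      using assms unfolding depth_below_def by blast
    show ?thesis
    proof (cases "c' = c")
      case False then show ?thesis using j by (intro exI[of _ j]) (simp add: component_diff_unit_vec)
    next
      case True
      then have e: "component c b + component c r - component c y + 1 = of_nat j" using j(2) by (simp add: algebra_simps)
      then have "j \<noteq> 0" using 1 True by auto
      then have "component c b + component c r - component c y = of_nat (j - 1)" using e by (simp add: of_nat_diff algebra_simps)
      then show ?thesis using j(1) by (intro exI[of _ "j - 1"]) auto
    qed
  next
    case 2 then show ?thesis using assms unfolding depth_below_def by blast
  qed
qed

lemma euler_slice_depth_below_Suc: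
  assumes "depth_below b c r (Suc J) g" shows "depth_below b c r J (euler_slice b c (component c r - of_nat J) r g)"
  unfolding depth_below_def
proof (intro allI impI)
  fix y assume "euler_slice b c (component c r - of_nat J) r g y \<noteq> 0"
  then consider "component c b + component c r - component c y + 1 \<noteq> 0" "g (y - unit_vec c) \<noteq> 0"
    | "component c y - component c b - (component c r - of_nat J) \<noteq> 0" "g y \<noteq> 0"
    using euler_slice_nonzero by blast
  then show "\<exists>j<J. component c b + component c r - component c y = of_nat j"
  proof cases
    case 1
    then obtain j where j: "j < Suc J" "component c b + component c r - component c (y - unit_vec c) = of_nat j"
      using assms unfolding depth_below_def by blast
    then have e: "component c b + component c r - component c y + 1 = of_nat j" by (simp add: algebra_simps)
    then have "j \<noteq> 0" using 1 by auto
    then have "component c b + component c r - component c y = of_nat (j - 1)" using e by (simp add: of_nat_diff algebra_simps)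
    then show ?thesis using j(1) \<open>j \<noteq> 0\<close> by (intro exI[of _ "j - 1"]) auto
  next
    case 2
    then obtain j where j: "j < Suc J" "component c b + component c r - component c y = of_nat j"
      using assms unfolding depth_below_def by blast
    have "j \<noteq> J"
    proof
      assume "j = J"
      then have "component c y - component c b - (component c r - of_nat J) = 0" using j(2) by (simp add: algebra_simps)
      then show False using 2 by simp
    qed
    then show ?thesis using j by (intro exI[of _ j]) auto
  qed
qed

lemma depth_below_0: "depth_below b c r 0 g \<Longrightarrow> g = (\<lambda>x. 0)"
  unfolding depth_below_def by auto

lemma euler_slice_depth_finite:
  assumes "depth_finite b c r g" shows "depth_finite b c r (euler_slice b c' l r g)"
  unfolding depth_finite_def
proof (intro allI impI)
  fix y assume "euler_slice b c' l r g y \<noteq> 0"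
  then consider "component c' b + component c' r - component c' y + 1 \<noteq> 0" "g (y - unit_vec c') \<noteq> 0" | "g y \<noteq> 0"
    using euler_slice_nonzero by blast
  then show "component c b + component c r - component c y \<in> \<nat>"
  proof cases
    case 1
    then have j: "component c b + component c r - component c (y - unit_vec c') \<in> \<nat>"
      using assms unfolding depth_finite_def by blast
    show ?thesis
    proof (cases "c' = c")
      case False then show ?thesis using j by (simp add: component_diff_unit_vec)
    next
      case True
      then have e: "component c b + component c r - component c y + 1 \<in> \<nat>" using j by (simp add: algebra_simps)
      then obtain j where e': "component c b + component c r - component c y + 1 = of_nat j" by (rule Nats_cases)
      then have "j \<noteq> 0" using 1 True by auto
      then have "component c b + component c r - component c y = of_nat (j - 1)" using e' by (simp add: of_nat_diff algebra_simps)
      then show ?thesis by simp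
    qed
  next
    case 2 then show ?thesis using assms unfolding depth_finite_def by blast
  qed
qed

lemma eulers_slice_depth_below: "depth_below b c r J g \<Longrightarrow> depth_below b c r J (eulers_slice b r ops g)"
  by (induction ops arbitrary: g) (auto simp: euler_slice_depth_below)

lemma eulers_slice_euler_block: "depth_below b c r J g \<Longrightarrow> eulers_slice b r (euler_block c (component c r) J) g = (\<lambda>x. 0)"
proof (induction J arbitrary: g)
  case 0 then show ?case using depth_below_0 by simp
next
  case (Suc J)
  then show ?case using euler_slice_depth_below_Suc[OF Suc.prems] by simp
qed

lemma eulers_slice_annihilates:
  assumes "depth_below b c r J g"
  shows "eulers_slice b r (o1 @ euler_block c (component c r) J @ o2) g = (\<lambda>x. 0)"
proof -
  have "depth_below b c r J (eulers_slice b r o1 g)" using assms by (rule eulers_slice_depth_below)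
  then show ?thesis by (simp add: eulers_slice_append eulers_slice_euler_block eulers_slice_zero)
qed

lemma euler_slice_injective:
  assumes fs: "fin_supp g" and si: "depth_finite b c r g" and nl: "l - component c r \<notin> \<int>"
    and z: "euler_slice b c l r g = (\<lambda>x. 0)"
  shows "g = (\<lambda>x. 0)"
proof (rule ccontr)
  assume "g \<noteq> (\<lambda>x. 0)"
  let ?S = "{x. g x \<noteq> 0}"
  let ?d = "\<lambda>x. nat_part (component c b + component c r - component c x)"
  have fS: "finite ?S" using fs by (simp add: fin_supp_def)
  have nS: "?S \<noteq> {}" using \<open>g \<noteq> (\<lambda>x. 0)\<close> by auto
  define m where "m = Max (?d ` ?S)"
  have "m \<in> ?d ` ?S" using Max_in[of "?d ` ?S"] fS nS unfolding m_def by auto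
  then obtain y where y: "y \<in> ?S" "?d y = m" by blast
  have "component c b + component c r - component c y \<in> \<nat>" using si y(1) unfolding depth_finite_def by blast
  then have dy: "of_nat (?d y) = component c b + component c r - component c y" by (rule of_nat_nat_part)
  have "g (y - unit_vec c) = 0"
  proof (rule ccontr)
    assume a: "g (y - unit_vec c) \<noteq> 0"
    then have "component c b + component c r - component c (y - unit_vec c) \<in> \<nat>" using si unfolding depth_finite_def by blast
    have "component c b + component c r - component c (y - unit_vec c) = of_nat (Suc (?d y))" using dy by (simp add: algebra_simps)
    then have "?d (y - unit_vec c) = Suc m" using y(2) by (metis nat_part_of_nat)
    moreover have "?d (y - unit_vec c) \<le> m" unfolding m_def using a fS by (intro Max_ge) (auto simp del: component_diff)
    ultimately show False by simp
  qed
  then have "sc (component c y - component c b - l) (g y) = 0" using z unfolding euler_slice_def fun_eq_iff by (metis add_0 scale_zero_right)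
  moreover have "component c y - component c b - l \<noteq> 0"
  proof
    assume "component c y - component c b - l = 0"
    then have "l - component c r = - of_nat (?d y)" using dy by (simp add: algebra_simps)
    then show False using nl by (metis Ints_minus Ints_of_nat)
  qed
  ultimately show False using y(1) by simp
qed

lemma eulers_slice_injective:
  assumes "fin_supp g" "depth_finite b False r g" "depth_finite b True r g"
    "\<forall>(c, l) \<in> set ops. l - component c r \<notin> \<int>" "eulers_slice b r ops g = (\<lambda>x. 0)"
  shows "g = (\<lambda>x. 0)"
  using assms
proof (induction ops arbitrary: g)
  case Nil then show ?case by simp
next
  case (Cons a ops)
  obtain c l where a: "a = (c, l)" by (cases a)
  have z: "euler_slice b c l r g = (\<lambda>x. 0)"
    using Cons.IH[of "euler_slice b c l r g"] Cons.prems a fin_supp_euler_slice euler_slice_depth_finite by auto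
  have si: "depth_finite b c r g" using Cons.prems by (cases c) auto
  have nl: "l - component c r \<notin> \<int>" using Cons.prems(4) a by auto
  show ?case by (rule euler_slice_injective[OF Cons.prems(1) si nl z])
qed

section \<open>Independence of exponent classes\<close>

lemma zw_expand_injective:
  assumes fin: "fin_supp g" and zero: "\<forall>p. zw_expand r g p = 0"
  shows "g = (\<lambda>x. 0)"
proof (rule ccontr)
  assume "g \<noteq> (\<lambda>x. 0)"
  then have "{x. g x \<noteq> 0} \<noteq> {}" by auto
  with fin obtain x0 where x0: "g x0 \<noteq> 0" and min: "\<And>y. g y \<noteq> 0 \<Longrightarrow> nat_pair (y - x0) \<Longrightarrow> y = x0"
    unfolding fin_supp_def by (rule nat_pair_minimal) auto
  \<comment> \<open>the coefficient of \<open>z^(x0 - r)\<close> only involves the minimal exponent \<open>x0\<close>\<close>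
  have "zw_expand r g (x0 - r) = Sum_any (\<lambda>x. sc (zw_coeff2 (- r) (x - x0)) (g x))"
    unfolding zw_expand_def by (simp add: algebra_simps)
  also have "\<dots> = (\<Sum>x\<in>{x0}. sc (zw_coeff2 (- r) (x - x0)) (g x))"
  proof (rule Sum_any.expand_superset)
    show "{x. sc (zw_coeff2 (- r) (x - x0)) (g x) \<noteq> 0} \<subseteq> {x0}"
    proof
      fix x assume "x \<in> {x. sc (zw_coeff2 (- r) (x - x0)) (g x) \<noteq> 0}"
      then have "g x \<noteq> 0" "zw_coeff2 (- r) (x - x0) \<noteq> 0" by auto
      then show "x \<in> {x0}" using min zw_coeff2_nonzero_imp_nat_pair by blast
    qed
  qed simp
  also have "\<dots> = g x0" by simp
  finally show False using zero x0 by simp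
qed

definition restrict_coset :: "'k \<times> 'k \<Rightarrow> 'k \<times> 'k \<Rightarrow> ('k \<times> 'k \<Rightarrow> 'v) \<Rightarrow> 'k \<times> 'k \<Rightarrow> 'v" where
  "restrict_coset bb r g x = (if int_pair (x - r - bb) then g x else 0)"

lemma fin_supp_restrict_coset: "fin_supp g \<Longrightarrow> fin_supp (restrict_coset bb r g)"
  unfolding fin_supp_def restrict_coset_def by (rule finite_subset[rotated]) auto

lemma zw_expand_restrict_coset: "zw_expand r (restrict_coset bb r g) p = (if int_pair (p - bb) then zw_expand r g p else 0)"
proof (cases "int_pair (p - bb)")
  case True
  have "zw_expand r (restrict_coset bb r g) p = zw_expand r g p"
    unfolding zw_expand_def
  proof (rule Sum_any.cong)
    fix x
    show "sc (zw_coeff2 (- r) (x - p - r)) (restrict_coset bb r g x) = sc (zw_coeff2 (- r) (x - p - r)) (g x)"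
    proof (cases "zw_coeff2 (- r) (x - p - r) = 0")
      case False
      then have "int_pair (x - p - r)" using zw_coeff2_nonzero_imp_nat_pair nat_pair_imp_int_pair by blast
      then have "int_pair ((x - p - r) + (p - bb))" using True by (rule int_pair_add)
      then have "int_pair (x - r - bb)" by (simp add: algebra_simps)
      then show ?thesis by (simp add: restrict_coset_def)
    qed simp
  qed
  then show ?thesis using True by simp
next
  case False
  have "zw_expand r (restrict_coset bb r g) p = Sum_any (\<lambda>x::'k\<times>'k. 0::'v)"
    unfolding zw_expand_def
  proof (rule Sum_any.cong)
    fix x
    show "sc (zw_coeff2 (- r) (x - p - r)) (restrict_coset bb r g x) = 0"
    proof (cases "zw_coeff2 (- r) (x - p - r) = 0")
      case False2: False
      then have "int_pair (x - p - r)" using zw_coeff2_nonzero_imp_nat_pair nat_pair_imp_int_pair by blast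
      then have "\<not> int_pair (x - r - bb)"
        using False int_pair_diff[of "x - r - bb" "x - p - r"] by (auto simp: algebra_simps)
      then show ?thesis by (simp add: restrict_coset_def)
    qed simp
  qed
  then show ?thesis using False by simp
qed

lemma depth_finite_imp_depth_below:
  assumes fs: "fin_supp g" and si: "depth_finite b c r g"
  shows "\<exists>J. depth_below b c r J g"
proof -
  let ?S = "{x. g x \<noteq> 0}"
  let ?d = "\<lambda>x. nat_part (component c b + component c r - component c x)"
  have fS: "finite ?S" using fs by (simp add: fin_supp_def)
  define J where "J = Suc (Max (insert 0 (?d ` ?S)))"
  have "depth_below b c r J g" unfolding depth_below_def
  proof (intro allI impI)
    fix x assume x: "g x \<noteq> 0"
    have "component c b + component c r - component c x \<in> \<nat>" using si x unfolding depth_finite_def by blast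
    then have "component c b + component c r - component c x = of_nat (?d x)" by (simp add: of_nat_nat_part)
    moreover have "?d x < J" unfolding J_def using fS x by (simp add: le_imp_less_Suc)
    ultimately show "\<exists>j<J. component c b + component c r - component c x = of_nat j" by blast
  qed
  then show ?thesis by blast
qed

lemma restrict_coset_nonzero: "restrict_coset bb r g x \<noteq> 0 \<Longrightarrow> int_pair (x - r - bb) \<and> g x \<noteq> 0"
  unfolding restrict_coset_def by (auto split: if_splits)

lemma depth_finite_diag_above:
  assumes "\<forall>x. g x \<noteq> 0 \<longrightarrow> nat_pair ((of_nat M, of_nat M) - (x - r - bb))"
  shows "depth_finite (bb + (of_nat M, of_nat M)) c r g"
  unfolding depth_finite_def
proof (intro allI impI)
  fix x assume "g x \<noteq> 0"
  then have "nat_pair ((of_nat M, of_nat M) - (x - r - bb))" using assms by blast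
  then have "nat_pair ((bb + (of_nat M, of_nat M)) + r - x)" by (simp add: algebra_simps)
  then have "component c ((bb + (of_nat M, of_nat M)) + r - x) \<in> \<nat>" by (rule nat_pair_component)
  then show "component c (bb + (of_nat M, of_nat M)) + component c r - component c x \<in> \<nat>" by simp
qed

lemma eulers_slice_blocks_annihilate:
  assumes "l \<in> set ls" "depth_below b (cc l) (h l) (Jf l) g"
  shows "eulers_slice b (h l) (concat (map (\<lambda>l. euler_block (cc l) (component (cc l) (h l)) (Jf l)) ls)) g = (\<lambda>x. 0)"
proof -
  obtain xs ys where ls: "ls = xs @ l # ys" using split_list[OF assms(1)] by blast
  let ?f = "\<lambda>l. euler_block (cc l) (component (cc l) (h l)) (Jf l)"
  have "concat (map ?f ls) = concat (map ?f xs) @ euler_block (cc l) (component (cc l) (h l)) (Jf l) @ concat (map ?f ys)"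
    using ls by simp
  then show ?thesis using eulers_slice_annihilates[OF assms(2)] by simp
qed

text \<open>For each \<open>l\<close> choose a component \<open>c\<close> with \<open>(h l - r0)\<^sub>c \<notin> \<int>\<close>; a block of Euler operators in
  that component annihilates \<open>g l\<close> but is injective on \<open>G\<close>. After applying all blocks only
  \<open>(z - w)^(-r0)\<close> times the image of \<open>G\<close> is left, so that image, and hence \<open>G\<close>, vanishes.\<close>

lemma zw_expand_classes_independent_bounded:
  fixes G :: "'k \<times> 'k \<Rightarrow> 'v" and g :: "'l \<Rightarrow> 'k \<times> 'k \<Rightarrow> 'v" and h :: "'l \<Rightarrow> 'k \<times> 'k"
  assumes fL: "finite L" and fG: "fin_supp G" and fg: "\<And>l. l \<in> L \<Longrightarrow> fin_supp (g l)"
    and ni: "\<forall>l\<in>L. \<not> int_pair (h l - r0)"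
    and bG: "\<And>c. depth_finite b c r0 G" and bg: "\<And>l c. l \<in> L \<Longrightarrow> depth_finite b c (h l) (g l)"
    and E: "\<And>p. zw_expand r0 G p + (\<Sum>l\<in>L. zw_expand (h l) (g l) p) = 0"
  shows "G = (\<lambda>x. 0)"
proof -
  define cc where "cc = (\<lambda>l. fst (h l - r0) \<in> \<int>)"
  have ccni: "component (cc l) (h l - r0) \<notin> \<int>" if "l \<in> L" for l
    using ni that unfolding cc_def int_pair_def by (cases "fst (h l - r0) \<in> \<int>") auto
  define Jf where "Jf = (\<lambda>l. SOME J. depth_below b (cc l) (h l) J (g l))"
  have sd: "depth_below b (cc l) (h l) (Jf l) (g l)" if "l \<in> L" for l
    unfolding Jf_def by (rule someI_ex) (rule depth_finite_imp_depth_below[OF fg[OF that] bg[OF that]])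
  obtain ls where ls: "set ls = L" using finite_list[OF fL] by blast
  define ops where "ops = concat (map (\<lambda>l. euler_block (cc l) (component (cc l) (h l)) (Jf l)) ls)"
  have kill: "eulers_slice b (h l) ops (g l) = (\<lambda>x. 0)" if "l \<in> L" for l
    unfolding ops_def using eulers_slice_blocks_annihilate[of l ls b cc h Jf "g l"] sd[OF that] that ls by simp
  have opsni: "\<forall>(c, l') \<in> set ops. l' - component c r0 \<notin> \<int>"
  proof (intro ballI, clarify)
    fix c l' assume "(c, l') \<in> set ops"
    then obtain l where l: "l \<in> L" "(c, l') \<in> set (euler_block (cc l) (component (cc l) (h l)) (Jf l))"
      unfolding ops_def using ls by auto
    then obtain j where c: "c = cc l" and l': "l' = component (cc l) (h l) - of_nat j" using euler_block_set by blast
    assume "l' - component c r0 \<in> \<int>"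
    then have "component (cc l) (h l - r0) - of_nat j \<in> \<int>" using c l' by (simp add: algebra_simps)
    then have "component (cc l) (h l - r0) \<in> \<int>" by (metis Ints_add Ints_of_nat diff_add_cancel)
    then show False using ccni[OF l(1)] by simp
  qed
  have "(\<lambda>p. zw_expand r0 (eulers_slice b r0 ops G) p)
      = (\<lambda>p. zw_expand r0 (eulers_slice b r0 ops G) p + (\<Sum>l\<in>L. zw_expand (h l) (eulers_slice b (h l) ops (g l)) p))"
    using kill by (simp add: zw_expand_zero)
  also have "\<dots> = eulers b ops (\<lambda>p. zw_expand r0 G p + (\<Sum>l\<in>L. zw_expand (h l) (g l) p))"
    unfolding eulers_add eulers_sum using eulers_zw_expand[OF fG] eulers_zw_expand[OF fg] by simp
  also have "\<dots> = (\<lambda>p. 0)" using E eulers_zero by simp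
  finally have "eulers_slice b r0 ops G = (\<lambda>x. 0)"
    using zw_expand_injective[OF fin_supp_eulers_slice[OF fG]] by (metis (no_types))
  then show "G = (\<lambda>x. 0)" using eulers_slice_injective[OF fG bG bG opsni] by blast
qed

text \<open>Restricting to one coset of \<open>p\<close> modulo \<open>\<int>\<^sup>2\<close> makes all supports bounded above, as needed
  for the Euler operators.\<close>

lemma zw_expand_classes_independent:
  fixes G :: "'k \<times> 'k \<Rightarrow> 'v" and g :: "'l \<Rightarrow> 'k \<times> 'k \<Rightarrow> 'v" and h :: "'l \<Rightarrow> 'k \<times> 'k"
  assumes fL: "finite L" and fG: "fin_supp G" and fg: "\<forall>l\<in>L. fin_supp (g l)"
    and ni: "\<forall>l\<in>L. \<not> int_pair (h l - r0)"
    and E: "\<forall>p. zw_expand r0 G p + (\<Sum>l\<in>L. zw_expand (h l) (g l) p) = 0"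
  shows "G = (\<lambda>x. 0)"
proof (rule ccontr)
  assume "G \<noteq> (\<lambda>x. 0)"
  then obtain x0 where x0: "G x0 \<noteq> 0" by (meson ext)
  define bb where "bb = x0 - r0"
  define G' where "G' = restrict_coset bb r0 G"
  define g' where "g' = (\<lambda>l. restrict_coset bb (h l) (g l))"
  have fG': "fin_supp G'" unfolding G'_def using fG by (rule fin_supp_restrict_coset)
  have fg': "fin_supp (g' l)" if "l \<in> L" for l
    unfolding g'_def using fg that by (simp add: fin_supp_restrict_coset)
  have E': "zw_expand r0 G' p + (\<Sum>l\<in>L. zw_expand (h l) (g' l) p) = 0" for p
    using E[rule_format, of p] unfolding G'_def g'_def zw_expand_restrict_coset by simp
  define Z where "Z = (\<lambda>x. x - r0 - bb) ` {x. G' x \<noteq> 0} \<union> (\<Union>l\<in>L. (\<lambda>x. x - h l - bb) ` {x. g' l x \<noteq> 0})"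
  have fZ: "finite Z" unfolding Z_def using fG' fg' fL by (auto simp: fin_supp_def)
  have iZ: "\<forall>z\<in>Z. int_pair z" unfolding Z_def G'_def g'_def using restrict_coset_nonzero by fastforce
  obtain M where M: "\<forall>z\<in>Z. nat_pair ((of_nat M, of_nat M) - z)"
    using int_pairs_bounded_above[OF fZ iZ] by blast
  define b where "b = bb + (of_nat M, of_nat M)"
  have bG: "depth_finite b c r0 G'" for c
    unfolding b_def by (rule depth_finite_diag_above) (use M in \<open>auto simp: Z_def\<close>)
  have bg: "depth_finite b c (h l) (g' l)" if "l \<in> L" for l c
    unfolding b_def by (rule depth_finite_diag_above) (use M that in \<open>auto simp: Z_def\<close>)
  have "G' = (\<lambda>x. 0)"
    by (rule zw_expand_classes_independent_bounded[where g = g', OF fL fG' fg' ni bG bg E'])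
  moreover have "G' x0 = G x0" unfolding G'_def restrict_coset_def bb_def by simp
  ultimately show False using x0 by simp
qed

lemma pairing_sum:
  assumes "finite L" "\<forall>l\<in>L. fin_supp (g l)"
  shows "pairing f (\<lambda>x. \<Sum>l\<in>L. g l x) = (\<Sum>l\<in>L. pairing f (g l))"
proof -
  define S where "S = (\<Union>l\<in>L. {x. g l x \<noteq> 0})"
  have fS: "finite S" unfolding S_def using assms by (auto simp: fin_supp_def)
  have sub: "{x. g l x \<noteq> 0} \<subseteq> S" if "l \<in> L" for l unfolding S_def using that by auto
  have sub2: "{x. (\<Sum>l\<in>L. g l x) \<noteq> 0} \<subseteq> S"
  proof
    fix x assume "x \<in> {x. (\<Sum>l\<in>L. g l x) \<noteq> 0}"
    then obtain l where "l \<in> L" "g l x \<noteq> 0" by (auto elim: sum.not_neutral_contains_not_neutral)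
    then show "x \<in> S" unfolding S_def by auto
  qed
  have "pairing f (\<lambda>x. \<Sum>l\<in>L. g l x) = (\<Sum>x\<in>S. sc (f x) (\<Sum>l\<in>L. g l x))"
    unfolding pairing_def using fS sub2 by (rule Sum_any_scale_superset)
  also have "\<dots> = (\<Sum>l\<in>L. \<Sum>x\<in>S. sc (f x) (g l x))"
    unfolding scale_sum_right by (rule sum.swap)
  also have "\<dots> = (\<Sum>l\<in>L. pairing f (g l))"
    unfolding pairing_def using Sum_any_scale_superset[OF fS sub] by simp
  finally show ?thesis .
qed

lemma zw_expand_sum: "finite L \<Longrightarrow> \<forall>l\<in>L. fin_supp (g l) \<Longrightarrow> zw_expand r (\<lambda>x. \<Sum>l\<in>L. g l x) p = (\<Sum>l\<in>L. zw_expand r (g l) p)"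
  unfolding zw_expand_eq_pairing by (rule pairing_sum)

lemma diag_deriv_eq_pairing: "diag_deriv k g = pairing (\<lambda>x. deriv_coeff2 x k) g" unfolding diag_deriv_def pairing_def ..

lemma diag_deriv_sum: "finite L \<Longrightarrow> \<forall>l\<in>L. fin_supp (g l) \<Longrightarrow> diag_deriv k (\<lambda>x. \<Sum>l\<in>L. g l x) = (\<Sum>l\<in>L. diag_deriv k (g l))"
  unfolding diag_deriv_eq_pairing by (rule pairing_sum)

lemma diag_deriv_not_nat_pair:
  assumes "\<not> nat_pair k" shows "diag_deriv k g = 0"
proof -
  have "deriv_coeff2 x k = 0" for x using deriv_coeff2_nonzero_imp_nat_pair assms by blast
  then show ?thesis unfolding diag_deriv_def by simp
qed

lemma diag_deriv_zero: "diag_deriv k (\<lambda>x. 0) = 0" unfolding diag_deriv_def by simp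

lemma zw_mult_common_exponent:
  assumes fG: "finite G" and fg: "\<forall>l\<in>G. fin_supp (g l)" and hk: "\<forall>l\<in>G. h l + pnat (k l) = H"
  shows "fin_supp (\<lambda>x. \<Sum>l\<in>G. zw_mult (k l) (g l) x)"
    and "zw_expand H (\<lambda>x. \<Sum>l\<in>G. zw_mult (k l) (g l) x) p = (\<Sum>l\<in>G. zw_expand (h l) (g l) p)"
    and "diag_deriv (H - m) (\<lambda>x. \<Sum>l\<in>G. zw_mult (k l) (g l) x) = (\<Sum>l\<in>G. diag_deriv (h l - m) (g l))"
proof -
  have fm: "\<forall>l\<in>G. fin_supp (zw_mult (k l) (g l))" using fg fin_supp_zw_mult by blast
  then show "fin_supp (\<lambda>x. \<Sum>l\<in>G. zw_mult (k l) (g l) x)" using fG by (intro fin_supp_sum) auto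
  have "zw_expand H (zw_mult (k l) (g l)) p = zw_expand (h l) (g l) p" if "l \<in> G" for l
    using zw_expand_zw_mult[of "g l" "h l" "k l" p] fg hk that by simp
  then show "zw_expand H (\<lambda>x. \<Sum>l\<in>G. zw_mult (k l) (g l) x) p = (\<Sum>l\<in>G. zw_expand (h l) (g l) p)"
    using zw_expand_sum[OF fG fm] by simp
  have "diag_deriv (H - m) (zw_mult (k l) (g l)) = diag_deriv (h l - m) (g l)" if "l \<in> G" for l
  proof -
    have e: "(h l - m) + pnat (k l) = H - m" using hk that by (simp add: algebra_simps)
    have "fin_supp (g l)" using fg that by blast
    then show ?thesis using diag_deriv_zw_mult[of "g l" "h l - m" "k l"] unfolding e by simp
  qed
  then show "diag_deriv (H - m) (\<lambda>x. \<Sum>l\<in>G. zw_mult (k l) (g l) x) = (\<Sum>l\<in>G. diag_deriv (h l - m) (g l))"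
    using diag_deriv_sum[OF fG fm] by simp
qed

text \<open>If \<open>\<Sum>\<^sub>l (z - w)^(-h l) g\<^sub>l = 0\<close>, the terms with \<open>h l - m \<in> \<int>\<^sup>2\<close> are moved to a common
  exponent \<open>H\<close>; their sum then vanishes by \<open>zw_expand_classes_independent\<close>, and the remaining
  terms contribute nothing to \<open>diag_deriv\<close>.\<close>

lemma diag_deriv_sum_eq_0:
  fixes g :: "'l \<Rightarrow> 'k \<times> 'k \<Rightarrow> 'v" and h :: "'l \<Rightarrow> 'k \<times> 'k"
  assumes fL: "finite L" and fg: "\<forall>l\<in>L. fin_supp (g l)"
    and E: "\<forall>p. (\<Sum>l\<in>L. zw_expand (h l) (g l) p) = 0"
  shows "(\<Sum>l\<in>L. diag_deriv (h l - m) (g l)) = 0"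
proof -
  define G where "G = {l\<in>L. int_pair (h l - m)}"
  have GL: "G \<subseteq> L" and fG: "finite G" using fL by (auto simp: G_def)
  obtain K k where hk: "\<forall>l\<in>G. (h l - m) + pnat (k l) = pnat K"
    using int_pairs_common_shift[of G "\<lambda>l. h l - m"] fG unfolding G_def by blast
  define H where "H = m + pnat K"
  have hkH: "\<forall>l\<in>G. h l + pnat (k l) = H" using hk by (auto simp: H_def algebra_simps)
  define S where "S = (\<lambda>x. \<Sum>l\<in>G. zw_mult (k l) (g l) x)"
  have split: "(\<Sum>l\<in>L. F l) = (\<Sum>l\<in>G. F l) + (\<Sum>l\<in>L - G. F l)" for F :: "'l \<Rightarrow> 'v"
    using sum.subset_diff[OF GL fL] by (simp only: add.commute)
  have fgG: "\<forall>l\<in>G. fin_supp (g l)" using fg GL by blast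
  note common = zw_mult_common_exponent[OF fG fgG hkH, folded S_def]
  have "S = (\<lambda>x. 0)"
  proof (rule zw_expand_classes_independent)
    show "\<forall>p. zw_expand H S p + (\<Sum>l\<in>L - G. zw_expand (h l) (g l) p) = 0"
    proof
      fix p show "zw_expand H S p + (\<Sum>l\<in>L - G. zw_expand (h l) (g l) p) = 0"
        using E[rule_format, of p] split[of "\<lambda>l. zw_expand (h l) (g l) p"] common(2)[of p] by simp
    qed
    show "\<forall>l\<in>L - G. \<not> int_pair (h l - H)"
      using int_pair_add[of "h l - H" "pnat K" for l] nat_pair_imp_int_pair[of "pnat K"]
      by (auto simp: G_def H_def algebra_simps)
  qed (use fL fg common(1) in auto)
  have "diag_deriv (h l - m) (g l) = 0" if "l \<in> L - G" for l
    using that diag_deriv_not_nat_pair nat_pair_imp_int_pair unfolding G_def by blast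
  then have "(\<Sum>l\<in>L. diag_deriv (h l - m) (g l)) = diag_deriv (H - m) S"
    using split[of "\<lambda>l. diag_deriv (h l - m) (g l)"] common(3)[of m] by simp
  also have "\<dots> = 0" using \<open>S = (\<lambda>x. 0)\<close> diag_deriv_zero by simp
  finally show ?thesis .
qed

section \<open>The \<open>n\<close>-th product\<close>

definition slice :: "('k, 'v) fdist2 \<Rightarrow> 'k \<times> 'k \<Rightarrow> 'v \<Rightarrow> 'k \<times> 'k \<Rightarrow> 'v" where
  "slice c e v x = c x (e - x) v"

lemma fin_supp_slice:
  assumes "vertex_series2 (\<lambda>p q. c p q v)"
  shows "fin_supp (slice c e v)"
proof -
  obtain S where S: "finite S" "\<forall>p q. c p q v \<noteq> 0 \<longrightarrow> (\<exists>s\<in>S. \<exists>i j::nat\<times>nat. p = padd (fst s) (pnat i) \<and> q = padd (snd s) (pnat j))"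
    using assms unfolding vertex_series2_def by blast
  have "{x. slice c e v x \<noteq> 0} \<subseteq> (\<Union>s\<in>S. (\<lambda>i. fst s + pnat i) ` {i. \<exists>j. pnat i + pnat j = e - fst s - snd s})"
  proof
    fix x assume "x \<in> {x. slice c e v x \<noteq> 0}"
    then have "c x (e - x) v \<noteq> 0" unfolding slice_def by simp
    then obtain s i j where s: "s \<in> S" "x = fst s + pnat i" "e - x = snd s + pnat j"
      using S(2) unfolding padd_eq by blast
    have "pnat i + pnat j = e - fst s - snd s" using s(2,3) by (simp add: prod_eq_iff algebra_simps)
    then show "x \<in> (\<Union>s\<in>S. (\<lambda>i. fst s + pnat i) ` {i. \<exists>j. pnat i + pnat j = e - fst s - snd s})"
      using s by blast
  qed
  moreover have "finite (\<Union>s\<in>S. (\<lambda>i. fst s + pnat i) ` {i. \<exists>j. pnat i + pnat j = e - fst s - snd s})"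
    using S(1) finite_pnat_summands by blast
  ultimately show ?thesis unfolding fin_supp_def by (rule finite_subset)
qed

lemma expand_zw_eq_zw_expand:
  "expand_zw sc (pneg h) c P Q v = zw_expand h (slice c (P + Q + h) v) P"
proof -
  have "zw_expand h (slice c (P + Q + h) v) P = Sum_any (\<lambda>i. sc (zw_coeff2 (- h) ((P + h + pnat i) - P - h)) (slice c (P + Q + h) v (P + h + pnat i)))"
    unfolding zw_expand_def
  proof (rule Sum_any_reindex_inj)
    show "inj (\<lambda>i. P + h + pnat i)" by (rule injI) simp
    show "{x. sc (zw_coeff2 (- h) (x - P - h)) (slice c (P + Q + h) v x) \<noteq> 0} \<subseteq> range (\<lambda>i. P + h + pnat i)"
    proof
      fix x assume "x \<in> {x. sc (zw_coeff2 (- h) (x - P - h)) (slice c (P + Q + h) v x) \<noteq> 0}"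
      then have "zw_coeff2 (- h) (x - P - h) \<noteq> 0" by auto
      then have "nat_pair (x - P - h)" by (rule zw_coeff2_nonzero_imp_nat_pair)
      then obtain i where "x - P - h = pnat i" using nat_pair_iff by blast
      then show "x \<in> range (\<lambda>i. P + h + pnat i)" by (intro range_eqI) (simp add: algebra_simps)
    qed
  qed
  also have "\<dots> = expand_zw sc (pneg h) c P Q v"
    unfolding expand_zw_def
  proof (rule Sum_any.cong)
    fix i :: "nat \<times> nat"
    have a: "(P + h + pnat i) - P - h = pnat i" by (simp add: prod_eq_iff)
    have b: "slice c (P + Q + h) v (P + h + pnat i) = c (padd (psub P (pneg h)) (pnat i)) (psub Q (pnat i)) v"
      by (simp add: slice_def padd_eq psub_eq pneg_eq algebra_simps)
    have d: "zw_coeff2 (- h) (pnat i) = (-1) ^ (fst i + snd i) * (fst (pneg h) gchoose fst i) * (snd (pneg h) gchoose snd i)"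
      by (simp add: zw_coeff2_def pneg_def power_add mult_ac)
    show "sc (zw_coeff2 (- h) ((P + h + pnat i) - P - h)) (slice c (P + Q + h) v (P + h + pnat i)) =
      sc ((-1) ^ (fst i + snd i) * (fst (pneg h) gchoose fst i) * (snd (pneg h) gchoose snd i))
         (c (padd (psub P (pneg h)) (pnat i)) (psub Q (pnat i)) v)"
      unfolding a b d ..
  qed
  finally show ?thesis by simp
qed

lemma diag_deriv2_eq_diag_deriv:
  "diag (deriv2 sc k c) q v = diag_deriv k (slice c (q + k) v)"
proof -
  have "diag_deriv k (slice c (q + k) v) = Sum_any (\<lambda>p. sc (deriv_coeff2 (p + k) k) (slice c (q + k) v (p + k)))"
    unfolding diag_deriv_def
  proof (rule Sum_any_reindex_inj)
    show "inj (\<lambda>p. p + k)" by (rule injI) simp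
    show "{x. sc (deriv_coeff2 x k) (slice c (q + k) v x) \<noteq> 0} \<subseteq> range (\<lambda>p. p + k)"
      by (auto intro: image_eqI[of _ _ "_ - k"])
  qed
  also have "\<dots> = diag (deriv2 sc k c) q v"
    unfolding diag_def deriv2_def
  proof (rule Sum_any.cong)
    fix p
    show "sc (deriv_coeff2 (p + k) k) (slice c (q + k) v (p + k)) =
          sc (ddiv (fst k) (fst p) * ddiv (snd k) (snd p)) (c (padd p k) (psub q p) v)"
      by (simp add: slice_def padd_eq psub_eq deriv_coeff2_def deriv_coeff_def ddiv_def)
  qed
  finally show ?thesis by simp
qed

lemma zw_expand_uminus: "zw_expand r (\<lambda>x. - g x) p = - zw_expand r g p"
  unfolding zw_expand_def by (simp add: Sum_any_uminus)

lemma diag_deriv_uminus: "diag_deriv k (\<lambda>x. - g x) = - diag_deriv k g"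
  unfolding diag_deriv_def by (simp add: Sum_any_uminus)

lemma field2_fin_supp_slice: "field2 sc c \<Longrightarrow> fin_supp (slice c e v)"
  unfolding field2_def by (intro fin_supp_slice) blast

lemma OPE_eq_zw_expand:
  assumes "is_OPE sc a b I h c"
  shows "a P (b (q - m - P) v) = (\<Sum>i\<in>I. zw_expand (h i) (slice (c i) (q + (h i - m)) v) P)"
proof -
  have "\<forall>p q v. a p (b q v) = (\<Sum>i\<in>I. expand_zw sc (pneg (h i)) (c i) p q v)"
    using assms unfolding is_OPE_def by blast
  then have "a P (b (q - m - P) v) = (\<Sum>i\<in>I. expand_zw sc (pneg (h i)) (c i) P (q - m - P) v)" by blast
  moreover have "P + (q - m - P) + h i = q + (h i - m)" for i by (simp add: algebra_simps)
  ultimately show ?thesis unfolding expand_zw_eq_zw_expand by (simp only:)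
qed

text \<open>The difference of two OPEs of \<open>a b\<close> is an expansion of zero, to which
  \<open>diag_deriv_sum_eq_0\<close> applies.\<close>

lemma nprod_OPE_independent:
  assumes o1: "is_OPE sc a b I h c" and o2: "is_OPE sc a b I' h' c'"
  shows "(\<lambda>q v. \<Sum>i\<in>I. diag (deriv2 sc (psub (psub (h i) (1, 1)) n) (c i)) q v)
       = (\<lambda>q v. \<Sum>i\<in>I'. diag (deriv2 sc (psub (psub (h' i) (1, 1)) n) (c' i)) q v)"
proof (intro ext)
  fix q v
  define m where "m = n + (1, 1)"
  define g where "g = case_sum (\<lambda>i. slice (c i) (q + (h i - m)) v) (\<lambda>j x. - slice (c' j) (q + (h' j - m)) v x)"
  define hh where "hh = case_sum h h'"
  have fI: "finite I" "finite I'" using o1 o2 unfolding is_OPE_def by auto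
  have "fin_supp (slice (c i) (q + (h i - m)) v)" if "i \<in> I" for i
    using o1 that unfolding is_OPE_def by (blast intro: field2_fin_supp_slice)
  moreover have "fin_supp (\<lambda>x. - slice (c' i) (q + (h' i - m)) v x)" if "i \<in> I'" for i
    using o2 that field2_fin_supp_slice unfolding is_OPE_def fin_supp_def by auto
  ultimately have fg: "\<forall>l\<in>I <+> I'. fin_supp (g l)"
    unfolding g_def by auto
  have "(\<Sum>l\<in>I <+> I'. zw_expand (hh l) (g l) p) = 0" for p
    using OPE_eq_zw_expand[OF o1, of p q m v] OPE_eq_zw_expand[OF o2, of p q m v]
    by (simp add: sum.Plus[OF fI] hh_def g_def zw_expand_uminus sum_negf)
  then have "(\<Sum>l\<in>I <+> I'. diag_deriv (hh l - m) (g l)) = 0"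
    using fI fg by (intro diag_deriv_sum_eq_0) auto
  then show "(\<Sum>i\<in>I. diag (deriv2 sc (psub (psub (h i) (1, 1)) n) (c i)) q v)
       = (\<Sum>i\<in>I'. diag (deriv2 sc (psub (psub (h' i) (1, 1)) n) (c' i)) q v)"
    by (simp add: sum.Plus[OF fI] hh_def g_def diag_deriv_uminus sum_negf psub_psub_1_1
        diag_deriv2_eq_diag_deriv m_def)
qed

lemma nprod_eq_OPE:
  assumes "is_OPE sc a b I h c"
  shows "nprod sc a n b = (\<lambda>q v. \<Sum>i\<in>I. diag (deriv2 sc (psub (psub (h i) (1, 1)) n) (c i)) q v)"
proof -
  let ?F = "\<lambda>I h c. (\<lambda>q v. \<Sum>i\<in>I. diag (deriv2 sc (psub (psub (h i) (1, 1)) n) (c i)) q v)"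
  let ?P = "\<lambda>d. \<exists>I h c. is_OPE sc a b I h c \<and> d = ?F I h c"
  have "?P (?F I h c)" using assms by blast
  then have "?P (SOME d. ?P d)" by (rule someI[where P = ?P])
  then obtain I' h' c' where o2: "is_OPE sc a b I' h' c'" and e: "(SOME d. ?P d) = ?F I' h' c'" by blast
  have "nprod sc a n b = ?F I' h' c'" unfolding nprod_def e ..
  also have "\<dots> = ?F I h c" using nprod_OPE_independent[OF o2 assms] .
  finally show ?thesis .
qed

lemma nprod_eq_diag_deriv:
  assumes "is_OPE sc a b I h c"
  shows "nprod sc a n b q v
    = (\<Sum>i\<in>I. diag_deriv (h i - (n + (1, 1))) (slice (c i) (q + (h i - (n + (1, 1)))) v))"
  unfolding nprod_eq_OPE[OF assms] psub_psub_1_1 diag_deriv2_eq_diag_deriv ..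

lemma deriv1_nprod_eq_diag_deriv:
  assumes "is_OPE sc a b I h c"
  shows "deriv1 sc (pnat j) (nprod sc a (padd n (pnat j)) b) p v
    = sc (deriv_coeff2 (p + pnat j) (pnat j))
        (\<Sum>i\<in>I. diag_deriv (h i - (n + (1, 1)) - pnat j) (slice (c i) (p + (h i - (n + (1, 1)))) v))"
proof -
  have "h i - (n + pnat j + (1, 1)) = h i - (n + (1, 1)) - pnat j"
    "p + pnat j + (h i - (n + (1, 1)) - pnat j) = p + (h i - (n + (1, 1)))" for i
    by (simp_all add: algebra_simps)
  then show ?thesis
    unfolding deriv1_apply padd_eq nprod_eq_diag_deriv[OF assms] by (simp only:)
qed

lemma finite_deriv1_nprod_nonzero:
  assumes "is_OPE sc a b I h c"
  shows "finite {j. deriv1 sc (pnat j) (nprod sc a (padd n (pnat j)) b) \<noteq> (\<lambda>_ _. 0)}"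
proof (rule finite_subset)
  show "{j. deriv1 sc (pnat j) (nprod sc a (padd n (pnat j)) b) \<noteq> (\<lambda>_ _. 0)}
      \<subseteq> (\<Union>i\<in>I. {j. nat_pair (h i - (n + (1, 1)) - pnat j)})"
  proof (rule subsetI, rule ccontr)
    fix j assume j: "j \<in> {j. deriv1 sc (pnat j) (nprod sc a (padd n (pnat j)) b) \<noteq> (\<lambda>_ _. 0)}"
      and "j \<notin> (\<Union>i\<in>I. {j. nat_pair (h i - (n + (1, 1)) - pnat j)})"
    then have "diag_deriv (h i - (n + (1, 1)) - pnat j) g = 0" if "i \<in> I" for i g
      using that diag_deriv_not_nat_pair by blast
    then have "deriv1 sc (pnat j) (nprod sc a (padd n (pnat j)) b) = (\<lambda>_ _. 0)"
      by (simp add: fun_eq_iff deriv1_nprod_eq_diag_deriv[OF assms])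
    with j show False by simp
  qed
  show "finite (\<Union>i\<in>I. {j. nat_pair (h i - (n + (1, 1)) - pnat j)})"
    using assms finite_nat_pair_diff_pnat unfolding is_OPE_def by blast
qed

section \<open>Skew-symmetry\<close>

lemma zeta_pow_square: "zeta_pow pa pb * zeta_pow pa pb = (1::'k)"
  by (simp add: zeta_pow_def)

lemma field2_swap:
  assumes "field2 sc c"
  shows "field2 sc (\<lambda>P Q v. sc (kk P Q) (c Q P v))"
  unfolding field2_def
proof (intro conjI allI)
  fix P Q show "Vector_Spaces.linear sc sc (\<lambda>v. sc (kk P Q) (c Q P v))"
    using assms unfolding field2_def by (intro linear_scale_comp) blast
next
  fix v
  obtain S where S: "finite S" "\<forall>p q. c p q v \<noteq> 0 \<longrightarrow> (\<exists>s\<in>S. \<exists>i j::nat\<times>nat. p = padd (fst s) (pnat i) \<and> q = padd (snd s) (pnat j))"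
    using assms unfolding field2_def vertex_series2_def by blast
  show "vertex_series2 (\<lambda>P Q. sc (kk P Q) (c Q P v))"
    unfolding vertex_series2_def
  proof (intro exI conjI allI impI)
    show "finite ((\<lambda>s. (snd s, fst s)) ` S)" using S(1) by simp
    fix p q assume "sc (kk p q) (c q p v) \<noteq> 0"
    then have "c q p v \<noteq> 0" by auto
    then obtain s i j where "s \<in> S" "q = padd (fst s) (pnat i)" "p = padd (snd s) (pnat j)" using S(2) by blast
    then show "\<exists>s\<in>(\<lambda>s. (snd s, fst s)) ` S. \<exists>i j::nat\<times>nat. p = padd (fst s) (pnat i) \<and> q = padd (snd s) (pnat j)"
      by (intro bexI[of _ "(snd s, fst s)"] exI[of _ j] exI[of _ i]) auto
  qed
qed

lemma OPE_swap:
  assumes fI: "finite I" and fld: "\<forall>i\<in>I. field2 sc (c i)"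
    and E2: "\<forall>p q v. sc (zeta_pow pa pb) (b q (a p v)) = (\<Sum>i\<in>I. expand_wz sc (pneg (h i)) (c i) p q v)"
  shows "is_OPE sc b a I h (\<lambda>i P Q v. sc (zeta_pow pa pb * neg1_pow (fst (pneg (h i)) - snd (pneg (h i)))) (c i Q P v))"
  unfolding is_OPE_def
proof (intro conjI ballI allI)
  show "finite I" by fact
  fix i assume "i \<in> I"
  then show "field2 sc (\<lambda>P Q v. sc (zeta_pow pa pb * neg1_pow (fst (pneg (h i)) - snd (pneg (h i)))) (c i Q P v))"
    using fld by (intro field2_swap) blast
next
  fix p q v
  let ?z = "zeta_pow pa pb :: 'k"
  have t: "expand_zw sc (pneg (h i)) (\<lambda>P Q v. sc (?z * neg1_pow (fst (pneg (h i)) - snd (pneg (h i)))) (c i Q P v)) p q v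
      = sc ?z (expand_wz sc (pneg (h i)) (c i) q p v)" for i
    unfolding expand_zw_def expand_wz_def scale_Sum_any
    by (rule Sum_any.cong) (simp add: mult_ac)
  have "(\<Sum>i\<in>I. expand_zw sc (pneg (h i)) (\<lambda>P Q v. sc (?z * neg1_pow (fst (pneg (h i)) - snd (pneg (h i)))) (c i Q P v)) p q v)
      = sc ?z (\<Sum>i\<in>I. expand_wz sc (pneg (h i)) (c i) q p v)"
    unfolding t by (simp add: scale_sum_right)
  also have "\<dots> = sc ?z (sc ?z (b p (a q v)))"
  proof -
    have "sc ?z (b p (a q v)) = (\<Sum>i\<in>I. expand_wz sc (pneg (h i)) (c i) q p v)" using E2 by blast
    then show ?thesis by simp
  qed
  also have "\<dots> = b p (a q v)" by (simp add: zeta_pow_square)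
  finally show "b p (a q v) = (\<Sum>i\<in>I. expand_zw sc (pneg (h i)) (\<lambda>P Q v. sc (?z * neg1_pow (fst (pneg (h i)) - snd (pneg (h i)))) (c i Q P v)) p q v)"
    by simp
qed

lemma sum_pairing:
  assumes "fin_supp g"
  shows "(\<Sum>j\<in>J. pairing (f j) g) = pairing (\<lambda>y. \<Sum>j\<in>J. f j y) g"
proof -
  have "(\<Sum>j\<in>J. pairing (f j) g) = (\<Sum>j\<in>J. \<Sum>x\<in>{x. g x \<noteq> 0}. sc (f j x) (g x))"
    using assms by (simp add: pairing_eq_sum)
  also have "\<dots> = (\<Sum>x\<in>{x. g x \<noteq> 0}. \<Sum>j\<in>J. sc (f j x) (g x))" by (rule sum.swap)
  also have "\<dots> = pairing (\<lambda>y. \<Sum>j\<in>J. f j y) g"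
    using assms by (simp add: pairing_eq_sum scale_sum_left)
  finally show ?thesis .
qed

lemma diag_deriv_slice_swap:
  "diag_deriv k (slice (\<lambda>P Q v. sc \<kappa> (c Q P v)) e v)
     = sc \<kappa> (pairing (\<lambda>y. deriv_coeff2 (e - y) k) (slice c e v))"
proof -
  have "diag_deriv k (slice (\<lambda>P Q v. sc \<kappa> (c Q P v)) e v)
      = Sum_any (\<lambda>y. sc (deriv_coeff2 (e - y) k) (slice (\<lambda>P Q v. sc \<kappa> (c Q P v)) e v (e - y)))"
    unfolding diag_deriv_def
  proof (rule Sum_any_reindex_inj)
    show "inj (\<lambda>y. e - y)" by (rule injI) simp
  qed (auto intro: image_eqI[of _ _ "e - _"])
  also have "\<dots> = sc \<kappa> (pairing (\<lambda>y. deriv_coeff2 (e - y) k) (slice c e v))"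
    unfolding pairing_def scale_Sum_any by (simp add: slice_def mult.commute)
  finally show ?thesis .
qed

lemma diag_deriv_Taylor:
  assumes "fin_supp g"
  shows "(\<Sum>j\<in>{..fst K}\<times>{..snd K}.
            sc ((-1) ^ (fst j + snd j) * deriv_coeff2 (p + pnat j) (pnat j)) (diag_deriv (pnat K - pnat j) g))
    = sc ((-1) ^ (fst K + snd K)) (pairing (\<lambda>y. deriv_coeff2 (p + pnat K - y) (pnat K)) g)"
proof -
  let ?c = "\<lambda>j. (-1) ^ (fst j + snd j) * deriv_coeff2 (p + pnat j) (pnat j) :: 'k"
  have "sc (?c j) (diag_deriv (pnat K - pnat j) g) = pairing (\<lambda>y. ?c j * deriv_coeff2 y (pnat K - pnat j)) g" for j
    unfolding diag_deriv_eq_pairing using assms by (rule scale_pairing)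
  then have "(\<Sum>j\<in>{..fst K}\<times>{..snd K}. sc (?c j) (diag_deriv (pnat K - pnat j) g))
      = (\<Sum>j\<in>{..fst K}\<times>{..snd K}. pairing (\<lambda>y. ?c j * deriv_coeff2 y (pnat K - pnat j)) g)"
    by (simp only:)
  also have "\<dots> = pairing (\<lambda>y. \<Sum>j\<in>{..fst K}\<times>{..snd K}. ?c j * deriv_coeff2 y (pnat K - pnat j)) g"
    by (rule sum_pairing[OF assms])
  also have "\<dots> = pairing (\<lambda>y. (-1) ^ (fst K + snd K) * deriv_coeff2 (p + pnat K - y) (pnat K)) g"
    by (simp only: alternating_deriv_coeff2_convolution)
  also have "\<dots> = sc ((-1) ^ (fst K + snd K)) (pairing (\<lambda>y. deriv_coeff2 (p + pnat K - y) (pnat K)) g)"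
    by (rule scale_pairing[OF assms, symmetric])
  finally show ?thesis .
qed

lemma diag_deriv_swap:
  fixes c :: "('k, 'v) fdist2" and h n p :: "'k \<times> 'k"
  assumes fin: "fin_supp (slice c (p + k) v)" and n: "fst n - snd n \<in> \<int>"
    and k: "k = h - (n + (1, 1))" and z: "z * z = 1"
  shows "sc z (diag_deriv k (slice (\<lambda>P Q v. sc (z * neg1_pow (fst (pneg h) - snd (pneg h))) (c Q P v)) (p + k) v))
   = Sum_any (\<lambda>j. sc (neg1_pow (fst n - snd n) * (-1) ^ (fst j + snd j) * deriv_coeff2 (p + pnat j) (pnat j))
          (diag_deriv (k - pnat j) (slice c (p + k) v)))"
    (is "_ = Sum_any ?R")
proof -
  define g where "g = slice c (p + k) v"
  define f where "f = (\<lambda>y. deriv_coeff2 (p + k - y) k)"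
  have lhs: "sc z (diag_deriv k (slice (\<lambda>P Q v. sc (z * neg1_pow (fst (pneg h) - snd (pneg h))) (c Q P v)) (p + k) v))
      = sc (neg1_pow (fst (pneg h) - snd (pneg h))) (pairing f g)"
    unfolding diag_deriv_slice_swap f_def g_def using z by (simp add: mult.assoc[symmetric])
  show ?thesis
  proof (cases "nat_pair k")
    case False
    then have "f = (\<lambda>y. 0)"
      unfolding f_def fun_eq_iff using deriv_coeff2_nonzero_imp_nat_pair by blast
    moreover have "\<not> nat_pair (k - pnat j)" for j
      using False nat_pair_add[of "k - pnat j" "pnat j"] by auto
    ultimately show ?thesis unfolding lhs g_def by (simp add: pairing_def diag_deriv_not_nat_pair)
  next
    case True
    then obtain K where K: "k = pnat K" using nat_pair_iff by blast
    have "Sum_any ?R = (\<Sum>j\<in>{..fst K}\<times>{..snd K}. ?R j)"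
    proof (rule Sum_any.expand_superset)
      show "{j. ?R j \<noteq> 0} \<subseteq> {..fst K}\<times>{..snd K}"
      proof
        fix j assume "j \<in> {j. ?R j \<noteq> 0}"
        then have "nat_pair (k - pnat j)" using diag_deriv_not_nat_pair by fastforce
        then show "j \<in> {..fst K}\<times>{..snd K}" by (simp add: K nat_pair_def Nats_diff_of_nat mem_Times_iff)
      qed
    qed simp
    also have "\<dots> = sc (neg1_pow (fst n - snd n) * (-1) ^ (fst K + snd K)) (pairing f g)"
      using arg_cong[OF diag_deriv_Taylor[OF fin, where K=K and p=p], of "sc (neg1_pow (fst n - snd n))"]
      unfolding K f_def g_def
      by (simp add: scale_sum_right mult.assoc flip: scale_scale)
    also have "neg1_pow (fst n - snd n) * (-1) ^ (fst K + snd K) = neg1_pow (fst (pneg h) - snd (pneg h))"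
      using neg1_pow_pneg[OF n, where h=h and K=K] k K by (simp add: algebra_simps)
    finally show ?thesis unfolding lhs by (rule sym)
  qed
qed

text \<open>Read \<open>b\<^sub>(\<^sub>n\<^sub>) a\<close> off the OPE of \<open>b a\<close> given by \<open>OPE_swap\<close>, and Taylor expand each
  \<open>c\<^sub>i(w, z)\<close> around \<open>z = w\<close>.\<close>

lemma nprod_skew_symmetry:
  assumes loc: "mutually_local sc pa pb a b" and n: "n \<in> Kcheck"
  shows "sc (zeta_pow pa pb) (nprod sc b n a p v)
    = Sum_any (\<lambda>j::nat \<times> nat. sc (neg1_pow (fst n - snd n) * (-1) ^ (fst j + snd j))
        (deriv1 sc (pnat j) (nprod sc a (padd n (pnat j)) b) p v))"
proof -
  obtain I :: "nat set" and h c where I: "finite I" and fld_h: "\<forall>i\<in>I. field2 sc (c i) \<and> h i \<in> Kcheck"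
    and ab: "\<forall>p q v. a p (b q v) = (\<Sum>i\<in>I. expand_zw sc (pneg (h i)) (c i) p q v)"
    and ba: "\<forall>p q v. sc (zeta_pow pa pb) (b q (a p v)) = (\<Sum>i\<in>I. expand_wz sc (pneg (h i)) (c i) p q v)"
    using loc unfolding mutually_local_def by blast
  have fld: "\<forall>i\<in>I. field2 sc (c i)" using fld_h by blast
  let ?z = "zeta_pow pa pb :: 'k"
  let ?m = "n + (1, 1)"
  let ?T = "\<lambda>i j. sc (neg1_pow (fst n - snd n) * (-1) ^ (fst j + snd j) * deriv_coeff2 (p + pnat j) (pnat j))
      (diag_deriv (h i - ?m - pnat j) (slice (c i) (p + (h i - ?m)) v))"
  have O_ab: "is_OPE sc a b I h c" unfolding is_OPE_def using I fld ab by blast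
  have fin: "fin_supp (slice (c i) e v)" if "i \<in> I" for i e using fld that field2_fin_supp_slice by blast
  have "sc ?z (nprod sc b n a p v)
      = (\<Sum>i\<in>I. sc ?z (diag_deriv (h i - ?m) (slice (\<lambda>P Q v.
           sc (?z * neg1_pow (fst (pneg (h i)) - snd (pneg (h i)))) (c i Q P v)) (p + (h i - ?m)) v)))"
    unfolding nprod_eq_diag_deriv[OF OPE_swap[OF I fld ba]] by (simp add: scale_sum_right)
  also have "\<dots> = (\<Sum>i\<in>I. Sum_any (?T i))"
  proof (rule sum.cong)
    have n': "fst n - snd n \<in> \<int>" using n by (simp add: Kcheck_def)
    show "sc ?z (diag_deriv (h i - ?m) (slice (\<lambda>P Q v.
           sc (?z * neg1_pow (fst (pneg (h i)) - snd (pneg (h i)))) (c i Q P v)) (p + (h i - ?m)) v))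
        = Sum_any (?T i)" if "i \<in> I" for i
      using fin[OF that] n' refl zeta_pow_square by (rule diag_deriv_swap)
  qed simp
  also have "\<dots> = Sum_any (\<lambda>j. \<Sum>i\<in>I. ?T i j)"
  proof (rule Sum_any_sum_swap[symmetric, OF I], intro ballI)
    fix i
    have "{j. ?T i j \<noteq> 0} \<subseteq> {j. nat_pair (h i - ?m - pnat j)}"
      using diag_deriv_not_nat_pair by fastforce
    then show "finite {j. ?T i j \<noteq> 0}" using finite_nat_pair_diff_pnat by (rule finite_subset)
  qed
  also have "\<dots> = Sum_any (\<lambda>j. sc (neg1_pow (fst n - snd n) * (-1) ^ (fst j + snd j))
        (deriv1 sc (pnat j) (nprod sc a (padd n (pnat j)) b) p v))"
    unfolding deriv1_nprod_eq_diag_deriv[OF O_ab] scale_scale scale_sum_right ..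
  finally show ?thesis .
qed

end

theorem mainTheorem14:
  fixes sc :: "'k::field_char_0 \<Rightarrow> 'v::ab_group_add \<Rightarrow> 'v"
    and V0 V1 :: "'v set" and pa pb :: bool
    and a b :: "('k, 'v) fdist1" and n :: "'k \<times> 'k"
  assumes "super_vs sc V0 V1"
    and "field1 sc a" and "field1 sc b"
    and "homogeneous V0 V1 pa a" and "homogeneous V0 V1 pb b"
    and "mutually_local sc pa pb a b"
    and "n \<in> Kcheck"
  shows "finite {i::nat \<times> nat. deriv1 sc (pnat i) (nprod sc a (padd n (pnat i)) b) \<noteq> (\<lambda>_ _. 0)}
    \<and> (\<forall>p v. sc (zeta_pow pa pb) (nprod sc b n a p v)
          = Sum_any (\<lambda>i::nat \<times> nat.
              sc (neg1_pow (fst n - snd n) * (-1) ^ (fst i + snd i))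
                 (deriv1 sc (pnat i) (nprod sc a (padd n (pnat i)) b) p v)))"
proof -
  interpret vector_space_char_0 sc
    using assms(1) by (simp add: super_vs_def vector_space_char_0_def)
  obtain I :: "nat set" and h c where "finite I" "\<forall>i\<in>I. field2 sc (c i) \<and> h i \<in> Kcheck"
    "\<forall>p q v. a p (b q v) = (\<Sum>i\<in>I. expand_zw sc (pneg (h i)) (c i) p q v)"
    using assms(6) unfolding mutually_local_def by blast
  then have "is_OPE sc a b I h c" unfolding is_OPE_def by blast
  then show ?thesis
    using finite_deriv1_nprod_nonzero nprod_skew_symmetry[OF assms(6,7)] by blast
qed

end
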